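(* Let $\Phi:\mathcal{S}(\mathbb{C}^2)\to\mathcal{S}(\mathbb{C}^2)$ be a map such that $$d_{\mathrm{sym}}(\Phi(\rho),\Phi(\omega))=d_{\mathrm{sym}}(\rho,\omega)\qquad\text{for all }\rho,\omega\in\mathcal{S}(\mathbb{C}^2),$$ and such that $\Phi$ maps pure states to pure states, i.e. $\Phi(\mathcal{P}_1(\mathbb{C}^2))\subseteq\mathcal{P}_1(\mathbb{C}^2)$. Then there is an operator $U$ on $\mathbb{C}^2$ which is either unitary or anti-unitary such that $\Phi(\rho)=U\rho U^*$ for all $\rho\in\mathcal{S}(\mathbb{C}^2)$. Conversely, for every unitary or anti-unitary $U$ on $\mathbb{C}^2$, the map $\rho\mapsto U\rho U^*$ is a $d_{\mathrm{sym}}$-isometry of $\mathcal{S}(\mathbb{C}^2)$.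
   Context: Let $\mathcal{H}=\mathbb{C}^2$, $\mathcal{H}^*$ its dual space. $\mathcal{S}(\mathcal{H})$ is the set of density operators (positive semidefinite, trace one) on $\mathcal{H}$; $\mathcal{P}_1(\mathcal{H})$ is the set of pure states (rank-one orthogonal projections). For a linear operator $A$ on $\mathcal{H}$, its transpose $A^T$ is the operator on $\mathcal{H}^*$ defined by $(A^T\varphi)(x)=\varphi(Ax)$. For $\rho,\omega\in\mathcal{S}(\mathcal{H})$, the set of quantum couplings is $\mathcal{C}(\rho,\omega)=\{\Pi\in\mathcal{S}(\mathcal{H}\otimes\mathcal{H}^* ):\ \mathrm{tr}_{\mathcal{H}^*}[\Pi]=\omega,\ \mathrm{tr}_{\mathcal{H}}[\Pi]=\rho^T\}$. For a finite set $\mathcal{A}=\{A_1,\dots,A_N\}$ of self-adjoint operators, the cost operator is $C_{\mathcal{A}}=\sum_{j=1}^N(A_j\otimes I^T-I\otimes A_j^T)^2$, the quantum Wasserstein distance is given by $D_{\mathcal{A}}^2(\rho,\omega)=\inf\{\mathrm{tr}[\Pi C_{\mathcal{A}}]:\Pi\in\mathcal{C}(\rho,\omega)\}$, and the quantum Wasserstein divergence is $d_{\mathcal{A}}(\rho,\omega)=\big(D_{\mathcal{A}}^2(\rho,\omega)-\tfrac12(D_{\mathcal{A}}^2(\rho,\rho)+D_{\mathcal{A}}^2(\omega,\omega))\big)^{1/2}$. The Pauli matrices are $\sigma_1=\begin{bmatrix}0&1\\1&0\end{bmatrix}$, $\sigma_2=\begin{bmatrix}0&-i\\i&0\end{bmatrix}$,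 $\sigma_3=\begin{bmatrix}1&0\\0&-1\end{bmatrix}$. $D_{\mathrm{sym}}$ and $d_{\mathrm{sym}}$ denote $D_{\mathcal{A}}$ and $d_{\mathcal{A}}$ for $\mathcal{A}=\{\sigma_1,\sigma_2,\sigma_3\}$. *)

theory Defs
  imports "Jordan_Normal_Form.Matrix"
begin

text \<open>The dual space H* is identified with C^2 via the dual basis; then the transpose
 A^T of the context is the ordinary matrix transpose. Operators on H (x) H* are
 4x4 matrices with the Kronecker-product basis ordering: index 2*i+k <-> e_i (x) e_k^*.\<close>

definition adj :: "complex mat \<Rightarrow> complex mat" where
  "adj A = mat (dim_col A) (dim_row A) (\<lambda>(i,j). cnj (A $$ (j,i)))"

definition cconj :: "complex mat \<Rightarrow> complex mat" where
  "cconj A = mat (dim_row A) (dim_col A) (\<lambda>(i,j). cnj (A $$ (i,j)))"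

definition mtrace :: "complex mat \<Rightarrow> complex" where
  "mtrace A = (\<Sum>i<dim_row A. A $$ (i,i))"

definition psd :: "nat \<Rightarrow> complex mat \<Rightarrow> bool" where
  "psd n A \<longleftrightarrow> A \<in> carrier_mat n n \<and>
     (\<forall>v \<in> carrier_vec n. let q = (\<Sum>i<n. \<Sum>j<n. cnj (v $ i) * A $$ (i,j) * v $ j)
                            in Im q = 0 \<and> Re q \<ge> 0)"

definition density :: "nat \<Rightarrow> complex mat \<Rightarrow> bool" where
  "density n A \<longleftrightarrow> psd n A \<and> mtrace A = 1"

definition states2 :: "complex mat set" where
  "states2 = {A. density 2 A}"

definition pure2 :: "complex mat set" where
  "pure2 = {P. \<exists>\<psi> \<in> carrier_vec 2. (\<Sum>i<2. cmod (\<psi> $ i)^2) = 1 \<and>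
                 P = mat 2 2 (\<lambda>(i,j). \<psi> $ i * cnj (\<psi> $ j))}"

definition kron2 :: "complex mat \<Rightarrow> complex mat \<Rightarrow> complex mat" where
  "kron2 A B = mat 4 4 (\<lambda>(i,j). A $$ (i div 2, j div 2) * B $$ (i mod 2, j mod 2))"

definition ptr_dual :: "complex mat \<Rightarrow> complex mat" where
  "ptr_dual P = mat 2 2 (\<lambda>(i,j). \<Sum>k<2. P $$ (2*i+k, 2*j+k))"

definition ptr_H :: "complex mat \<Rightarrow> complex mat" where
  "ptr_H P = mat 2 2 (\<lambda>(k,l). \<Sum>i<2. P $$ (2*i+k, 2*i+l))"

definition couplings :: "complex mat \<Rightarrow> complex mat \<Rightarrow> complex mat set" where
  "couplings \<rho> \<omega> = {P. density 4 P \<and> ptr_dual P = \<omega> \<and> ptr_H P = transpose_mat \<rho>}"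

definition cost_op :: "complex mat list \<Rightarrow> complex mat" where
  "cost_op As = foldr (\<lambda>A C. (let M = kron2 A (1\<^sub>m 2) - kron2 (1\<^sub>m 2) (transpose_mat A)
                                   in M * M) + C) As (0\<^sub>m 4 4)"

definition sigma1 :: "complex mat" where
  "sigma1 = mat_of_rows_list 2 [[0, 1], [1, 0]]"
definition sigma2 :: "complex mat" where
  "sigma2 = mat_of_rows_list 2 [[0, -\<i>], [\<i>, 0]]"
definition sigma3 :: "complex mat" where
  "sigma3 = mat_of_rows_list 2 [[1, 0], [0, -1]]"

definition QW2 :: "complex mat list \<Rightarrow> complex mat \<Rightarrow> complex mat \<Rightarrow> real" where
  "QW2 As \<rho> \<omega> = Inf ((\<lambda>P. Re (mtrace (P * cost_op As))) ` couplings \<rho> \<omega>)"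

definition QWdiv :: "complex mat list \<Rightarrow> complex mat \<Rightarrow> complex mat \<Rightarrow> real" where
  "QWdiv As \<rho> \<omega> = sqrt (QW2 As \<rho> \<omega> - (QW2 As \<rho> \<rho> + QW2 As \<omega> \<omega>) / 2)"

definition d_sym :: "complex mat \<Rightarrow> complex mat \<Rightarrow> real" where
  "d_sym = QWdiv [sigma1, sigma2, sigma3]"

definition unitary2 :: "complex mat \<Rightarrow> bool" where
  "unitary2 U \<longleftrightarrow> U \<in> carrier_mat 2 2 \<and> U * adj U = 1\<^sub>m 2 \<and> adj U * U = 1\<^sub>m 2"

text \<open>Every anti-unitary U on C^2 is U = V K with V unitary and K the entrywise complex
 conjugation (and conversely); then U rho U^* = V (conj rho) V^*.\<close>
definition antiunitary_conj :: "complex mat \<Rightarrow> complex mat \<Rightarrow> complex mat" where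
  "antiunitary_conj V \<rho> = V * cconj \<rho> * adj V"

definition unitary_conj :: "complex mat \<Rightarrow> complex mat \<Rightarrow> complex mat" where
  "unitary_conj U \<rho> = U * \<rho> * adj U"

end

theory Submission
  imports Defs "Jordan_Normal_Form.Determinant"
begin

text \<open>The Pauli cost operator is \<open>8 I - 4 |f\<rangle>\<langle>f|\<close> with \<open>f\<close> the maximally entangled vector.
  If \<open>\<sigma>\<close> is pure, positivity forces every coupling of \<open>\<rho>\<close> and \<open>\<sigma>\<close> to coincide with
  \<open>\<sigma> \<otimes> \<rho>\<^sup>T\<close> on the entries the cost sees, so \<open>D\<^sup>2(\<rho>,\<sigma>) = 8 - 4 tr(\<rho>\<sigma>)\<close>. Hence a
  \<open>d_sym\<close>-isometry preserving pure states preserves the self-distances \<open>D\<^sup>2(\<rho>,\<rho>)\<close> and all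
  transition probabilities \<open>tr(\<rho>\<sigma>)\<close> with \<open>\<sigma>\<close> pure. These determine a qubit state from
  its overlaps with \<open>|0\<rangle>, |+\<rangle>, |+i\<rangle>\<close>: after a unitary correction fixing \<open>|0\<rangle>\<close> and
  \<open>|+\<rangle>\<close>, the only freedom left is \<open>|+i\<rangle> \<mapsto> |\<plusminus>i\<rangle>\<close>, i.e. the identity or complex
  conjugation. Conversely, unitary conjugation acts on couplings by \<open>V \<otimes> cconj V\<close>, which
  fixes \<open>f\<close>, and complex conjugation acts entrywise; both preserve the cost.\<close>

lemma sum_lessThan_2: "(\<Sum>i<(2::nat). f i) = f 0 + (f 1 :: 'a::comm_monoid_add)"
  by (simp add: eval_nat_numeral)

lemma sum_lessThan_4: "(\<Sum>i<(4::nat). f i) = f 0 + f 1 + f 2 + (f 3 :: 'a::comm_monoid_add)"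
  by (simp add: eval_nat_numeral)

lemma sum_atLeast0LessThan_2: "(\<Sum>i\<in>{0..<(2::nat)}. f i) = f 0 + (f 1 :: 'a::comm_monoid_add)"
  by (simp add: eval_nat_numeral atLeast0LessThan)

lemma sum_atLeast0LessThan_4:
  "(\<Sum>i\<in>{0..<(4::nat)}. f i) = f 0 + f 1 + f 2 + (f 3 :: 'a::comm_monoid_add)"
  by (simp add: eval_nat_numeral atLeast0LessThan)

lemmas sum_small = sum_lessThan_2 sum_lessThan_4 sum_atLeast0LessThan_2 sum_atLeast0LessThan_4

lemma less_2_cases_nat: "(i::nat) < 2 \<Longrightarrow> (i = 0 \<Longrightarrow> P) \<Longrightarrow> (i = 1 \<Longrightarrow> P) \<Longrightarrow> P"
  by (metis less_2_cases One_nat_def)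

lemma mat2_eqI:
  "A \<in> carrier_mat 2 2 \<Longrightarrow> B \<in> carrier_mat 2 2 \<Longrightarrow>
   (\<forall>i\<in>{0,1::nat}. \<forall>j\<in>{0,1::nat}. A $$ (i,j) = B $$ (i,j)) \<Longrightarrow> A = B"
  by (rule eq_matI) (auto simp: less_Suc_eq numeral_eq_Suc)

lemma mat4_eqI:
  "A \<in> carrier_mat 4 4 \<Longrightarrow> B \<in> carrier_mat 4 4 \<Longrightarrow>
   (\<forall>i\<in>{0,1,2,3::nat}. \<forall>j\<in>{0,1,2,3::nat}. A $$ (i,j) = B $$ (i,j)) \<Longrightarrow> A = B"
  by (rule eq_matI) (auto simp: less_Suc_eq numeral_eq_Suc)

lemma adj_carrier [simp]: "A \<in> carrier_mat n m \<Longrightarrow> adj A \<in> carrier_mat m n"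
  by (simp add: adj_def)

lemma adj_index [simp]: "i < dim_col A \<Longrightarrow> j < dim_row A \<Longrightarrow> adj A $$ (i,j) = cnj (A $$ (j,i))"
  by (simp add: adj_def)

lemma adj_dims [simp]: "dim_row (adj A) = dim_col A" "dim_col (adj A) = dim_row A"
  by (simp_all add: adj_def)

lemma adj_adj [simp]: "adj (adj A) = A"
  by (rule eq_matI) (simp_all add: adj_def)

lemma cconj_carrier [simp]: "A \<in> carrier_mat n m \<Longrightarrow> cconj A \<in> carrier_mat n m"
  by (simp add: cconj_def)

lemma cconj_index [simp]: "i < dim_row A \<Longrightarrow> j < dim_col A \<Longrightarrow> cconj A $$ (i,j) = cnj (A $$ (i,j))"
  by (simp add: cconj_def)

lemma cconj_dims [simp]: "dim_row (cconj A) = dim_row A" "dim_col (cconj A) = dim_col A"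
  by (simp_all add: cconj_def)

lemma cconj_cconj [simp]: "cconj (cconj A) = A"
  by (rule eq_matI) (simp_all add: cconj_def)

lemma transpose_cconj: "transpose_mat (cconj A) = cconj (transpose_mat A)"
  by (rule eq_matI) (auto simp: cconj_def)

lemma mtrace_cconj: "A \<in> carrier_mat n n \<Longrightarrow> mtrace (cconj A) = cnj (mtrace A)"
  by (simp add: mtrace_def cconj_def)

lemma mtrace_mult_comm:
  assumes "A \<in> carrier_mat n m" "B \<in> carrier_mat m n"
  shows "mtrace (A * B) = mtrace (B * A)"
proof -
  have "mtrace (A * B) = (\<Sum>i<n. \<Sum>k<m. A $$ (i,k) * B $$ (k,i))"
    using assms by (simp add: mtrace_def scalar_prod_def atLeast0LessThan)
  also have "\<dots> = (\<Sum>k<m. \<Sum>i<n. B $$ (k,i) * A $$ (i,k))"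
    by (subst sum.swap) (simp add: mult.commute)
  also have "\<dots> = mtrace (B * A)"
    using assms by (simp add: mtrace_def scalar_prod_def atLeast0LessThan)
  finally show ?thesis .
qed

lemma mtrace_conj_isometry:
  assumes W: "W \<in> carrier_mat n n" and WW: "adj W * W = 1\<^sub>m n" and P: "P \<in> carrier_mat n n"
  shows "mtrace (W * P * adj W) = mtrace P"
proof -
  have "mtrace ((W * P) * adj W) = mtrace (adj W * (W * P))"
    by (rule mtrace_mult_comm[of _ n n]) (use W P in auto)
  also have "adj W * (W * P) = (adj W * W) * P"
    using W P by (metis adj_carrier assoc_mult_mat)
  finally show ?thesis using WW P by simp
qed

lemma conj_mult_index:
  assumes "A \<in> carrier_mat n n" "B \<in> carrier_mat n n" "i < n" "j < n"
  shows "(B * A * adj B) $$ (i,j) = (\<Sum>c<n. \<Sum>l<n. B $$ (i,c) * A $$ (c,l) * cnj (B $$ (j,l)))"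
proof -
  have "(B * A * adj B) $$ (i,j) = (\<Sum>l<n. (\<Sum>c<n. B $$ (i,c) * A $$ (c,l)) * cnj (B $$ (j,l)))"
    using assms by (simp add: scalar_prod_def atLeast0LessThan)
  also have "\<dots> = (\<Sum>c<n. \<Sum>l<n. B $$ (i,c) * A $$ (c,l) * cnj (B $$ (j,l)))"
    by (subst sum.swap) (simp add: sum_distrib_right)
  finally show ?thesis .
qed

definition sesq :: "nat \<Rightarrow> complex mat \<Rightarrow> complex vec \<Rightarrow> complex vec \<Rightarrow> complex" where
  "sesq n A u w = (\<Sum>i<n. \<Sum>j<n. cnj (u $ i) * A $$ (i,j) * w $ j)"

lemma psd_iff_sesq:
  "psd n A \<longleftrightarrow> A \<in> carrier_mat n n \<and>
     (\<forall>v \<in> carrier_vec n. Im (sesq n A v v) = 0 \<and> Re (sesq n A v v) \<ge> 0)"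
  by (simp add: psd_def sesq_def Let_def)

lemma psd_sesq:
  "psd n A \<Longrightarrow> v \<in> carrier_vec n \<Longrightarrow> Im (sesq n A v v) = 0 \<and> Re (sesq n A v v) \<ge> 0"
  by (simp add: psd_iff_sesq)

lemma sesq_conj:
  assumes A: "A \<in> carrier_mat n n" and B: "B \<in> carrier_mat n n"
    and u: "u \<in> carrier_vec n" and v: "v \<in> carrier_vec n"
  shows "sesq n (B * A * adj B) u v = sesq n A (adj B *\<^sub>v u) (adj B *\<^sub>v v)"
proof -
  have adj_mult: "(adj B *\<^sub>v w) $ k = (\<Sum>i<n. cnj (B $$ (i,k)) * w $ i)"
    if "k < n" "w \<in> carrier_vec n" for k w
    using B that by (simp add: scalar_prod_def atLeast0LessThan mult.commute)
  have "sesq n (B * A * adj B) u v =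
      (\<Sum>i<n. \<Sum>j<n. \<Sum>k<n. \<Sum>l<n. cnj (u $ i) * B $$ (i,k) * A $$ (k,l) * cnj (B $$ (j,l)) * v $ j)"
    unfolding sesq_def
    by (simp add: conj_mult_index[OF A B] sum_distrib_left sum_distrib_right mult.assoc)
  also have "\<dots> =
      (\<Sum>k<n. \<Sum>l<n. \<Sum>i<n. \<Sum>j<n. cnj (u $ i) * B $$ (i,k) * A $$ (k,l) * cnj (B $$ (j,l)) * v $ j)"
    by (subst sum.swap, subst (2) sum.swap, rule sum.cong[OF refl], subst sum.swap,
        rule sum.cong[OF refl], rule sum.swap)
  also have "\<dots> = sesq n A (adj B *\<^sub>v u) (adj B *\<^sub>v v)"
    unfolding sesq_def using u v
    by (simp add: adj_mult sum_distrib_left sum_distrib_right mult.assoc mult.left_commute mult.commute)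
  finally show ?thesis .
qed

lemma psd_conj:
  assumes "psd n A" "B \<in> carrier_mat n n"
  shows "psd n (B * A * adj B)"
proof -
  have A: "A \<in> carrier_mat n n" using assms(1) psd_iff_sesq by blast
  have "adj B *\<^sub>v v \<in> carrier_vec n" if "v \<in> carrier_vec n" for v
    using assms(2) that by (metis adj_carrier mult_mat_vec_carrier)
  with assms show ?thesis
    unfolding psd_iff_sesq using sesq_conj[OF A assms(2)] A by auto
qed

lemma psd_cconj:
  assumes "psd n A"
  shows "psd n (cconj A)"
proof -
  have A: "A \<in> carrier_mat n n" using assms psd_iff_sesq by blast
  have "sesq n (cconj A) v v = cnj (sesq n A (conjugate v) (conjugate v))" if "v \<in> carrier_vec n" for v
    using A that by (simp add: sesq_def)
  with assms A show ?thesis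
    unfolding psd_iff_sesq by auto
qed

lemma linear_quadratic_nonneg_imp_zero:
  fixes a b :: real
  assumes "\<forall>s. a * s + b * s^2 \<ge> 0"
  shows "a = 0"
proof (rule ccontr)
  assume "a \<noteq> 0"
  define B where "B = \<bar>b\<bar> + 1"
  define s where "s = - a / (2 * B)"
  have "B > 0" by (simp add: B_def)
  have "s \<noteq> 0" using \<open>a \<noteq> 0\<close> \<open>B > 0\<close> by (simp add: s_def)
  have "a * s + b * s^2 \<le> a * s + \<bar>b\<bar> * s^2"
    by (intro add_left_mono mult_right_mono) auto
  also have "\<dots> < a * s + B * s^2" using \<open>s \<noteq> 0\<close> by (simp add: B_def)
  also have "\<dots> = - (a^2) / (4 * B)" using \<open>B > 0\<close>
    by (simp add: s_def field_simps power2_eq_square)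
  also have "\<dots> < 0" using \<open>a \<noteq> 0\<close> \<open>B > 0\<close> by simp
  finally show False using assms by (meson not_less)
qed

lemma sesq_expand:
  "(\<Sum>i<n. \<Sum>j<n. cnj (x i + t * y i) * a i j * (x j + t * y j)) =
   (\<Sum>i<n. \<Sum>j<n. cnj (x i) * a i j * x j) + t * (\<Sum>i<n. \<Sum>j<n. cnj (x i) * a i j * y j)
   + cnj t * (\<Sum>i<n. \<Sum>j<n. cnj (y i) * a i j * x j) + cnj t * t * (\<Sum>i<n. \<Sum>j<n. cnj (y i) * a i j * y j)"
proof -
  have "\<And>i j. cnj (x i + t * y i) * a i j * (x j + t * y j) =
     cnj (x i) * a i j * x j + t * (cnj (x i) * a i j * y j) + cnj t * (cnj (y i) * a i j * x j)
     + cnj t * t * (cnj (y i) * a i j * y j)" by (simp add: algebra_simps)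
  then show ?thesis by (simp add: sum.distrib sum_distrib_left)
qed

text \<open>Test positivity on \<open>v + t w\<close> for \<open>t = s, \<i> s, \<plusminus>1, \<plusminus>\<i>\<close> with \<open>s\<close> real.\<close>

lemma psd_isotropic_kernel:
  assumes "psd n A" "v \<in> carrier_vec n" "w \<in> carrier_vec n" "sesq n A v v = 0"
  shows "sesq n A v w = 0" "sesq n A w v = 0"
proof -
  define P where "P = sesq n A v w"
  define Q where "Q = sesq n A w v"
  define r where "r = sesq n A w w"
  have pos: "Im (t*P + cnj t * Q + cnj t * t * r) = 0 \<and> Re (t*P + cnj t * Q + cnj t * t * r) \<ge> 0"
    for t
  proof -
    let ?u = "vec n (\<lambda>i. v $ i + t * w $ i)"
    have "sesq n A ?u ?u = sesq n A v v + t * P + cnj t * Q + cnj t * t * r"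
      unfolding sesq_def P_def Q_def r_def by (simp add: sesq_expand[symmetric])
    with psd_sesq[OF assms(1), of ?u] assms(4) show ?thesis by simp
  qed
  have "\<forall>s::real. Re (P + Q) * s + Re r * s^2 \<ge> 0"
    using pos[of "complex_of_real _"] by (simp add: algebra_simps power2_eq_square)
  hence a: "Re (P + Q) = 0" by (rule linear_quadratic_nonneg_imp_zero)
  have "\<forall>s::real. (- Im (P - Q)) * s + Re r * s^2 \<ge> 0"
    using pos[of "\<i> * complex_of_real _"] by (simp add: algebra_simps power2_eq_square)
  hence c: "Im (P - Q) = 0" using linear_quadratic_nonneg_imp_zero by fastforce
  have b: "Im (P + Q) + Im r = 0" "- Im (P + Q) + Im r = 0"
    using pos[of 1] pos[of "-1"] by simp_all
  have d: "Re (P - Q) + Im r = 0" "- Re (P - Q) + Im r = 0"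
    using pos[of "\<i>"] pos[of "-\<i>"] by (simp_all add: algebra_simps)
  from a b c d show "sesq n A v w = 0" "sesq n A w v = 0"
    unfolding P_def[symmetric] Q_def[symmetric] by (simp_all add: complex_eq_iff)
qed

subsection \<open>The cost of the Pauli family\<close>

lemma sigma_entries:
  "dim_row sigma1 = 2" "dim_col sigma1 = 2" "sigma1 $$ (0,0) = 0" "sigma1 $$ (0,Suc 0) = 1"
  "sigma1 $$ (Suc 0,0) = 1" "sigma1 $$ (Suc 0,Suc 0) = 0"
  "dim_row sigma2 = 2" "dim_col sigma2 = 2" "sigma2 $$ (0,0) = 0" "sigma2 $$ (0,Suc 0) = -\<i>"
  "sigma2 $$ (Suc 0,0) = \<i>" "sigma2 $$ (Suc 0,Suc 0) = 0"
  "dim_row sigma3 = 2" "dim_col sigma3 = 2" "sigma3 $$ (0,0) = 1" "sigma3 $$ (0,Suc 0) = 0"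
  "sigma3 $$ (Suc 0,0) = 0" "sigma3 $$ (Suc 0,Suc 0) = -1"
  by (auto simp: sigma1_def sigma2_def sigma3_def mat_of_rows_list_def)

text \<open>\<open>cost_sym = 8 I - 4 |f\<rangle>\<langle>f|\<close> where \<open>f = max_ent = e\<^sub>0 \<otimes> e\<^sub>0\<^sup>* + e\<^sub>1 \<otimes> e\<^sub>1\<^sup>*\<close>
  corresponds to the identity operator under \<open>H \<otimes> H\<^sup>* \<cong> End H\<close>.\<close>

definition cost_sym :: "complex mat" where
  "cost_sym = mat 4 4 (\<lambda>(i,j). if i = j then (if i = 0 \<or> i = 3 then 4 else 8)
                              else if (i = 0 \<and> j = 3) \<or> (i = 3 \<and> j = 0) then -4 else 0)"

definition max_ent :: "complex vec" where
  "max_ent = vec 4 (\<lambda>a. if a = 0 \<or> a = 3 then 1 else 0)"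

lemma cost_op_Pauli: "cost_op [sigma1, sigma2, sigma3] = cost_sym"
proof -
  let ?M = "\<lambda>A. kron2 A (1\<^sub>m 2) - kron2 (1\<^sub>m 2) (transpose_mat A)"
  have "cost_op [sigma1, sigma2, sigma3] =
      ?M sigma1 * ?M sigma1 + (?M sigma2 * ?M sigma2 + (?M sigma3 * ?M sigma3 + 0\<^sub>m 4 4))"
    by (simp add: cost_op_def Let_def)
  also have "\<dots> = cost_sym"
    by (rule mat4_eqI) (auto simp: cost_sym_def kron2_def scalar_prod_def sum_small sigma_entries)
  finally show ?thesis .
qed

lemma sesq_max_ent:
  "P \<in> carrier_mat 4 4 \<Longrightarrow> sesq 4 P max_ent max_ent = P $$ (0,0) + P $$ (0,3) + P $$ (3,0) + P $$ (3,3)"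
  by (simp add: sesq_def max_ent_def sum_small)

lemma mtrace_mult_cost_sym:
  "P \<in> carrier_mat 4 4 \<Longrightarrow> mtrace (P * cost_sym) = 8 * mtrace P - 4 * sesq 4 P max_ent max_ent"
  by (simp add: sesq_max_ent mtrace_def cost_sym_def scalar_prod_def sum_small algebra_simps)

definition coupling_costs :: "complex mat \<Rightarrow> complex mat \<Rightarrow> real set" where
  "coupling_costs \<rho> \<omega> = (\<lambda>P. Re (mtrace (P * cost_sym))) ` couplings \<rho> \<omega>"

lemma QW2_Pauli: "QW2 [sigma1, sigma2, sigma3] \<rho> \<omega> = Inf (coupling_costs \<rho> \<omega>)"
  by (simp add: QW2_def cost_op_Pauli coupling_costs_def)

lemma coupling_costs_subset:
  assumes "\<And>P. P \<in> couplings \<rho> \<omega> \<Longrightarrow>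
     T P \<in> couplings \<rho>' \<omega>' \<and> Re (mtrace (T P * cost_sym)) = Re (mtrace (P * cost_sym))"
  shows "coupling_costs \<rho> \<omega> \<subseteq> coupling_costs \<rho>' \<omega>'"
  unfolding coupling_costs_def
proof (rule image_subsetI)
  fix P assume "P \<in> couplings \<rho> \<omega>"
  with assms have "T P \<in> couplings \<rho>' \<omega>'" "Re (mtrace (P * cost_sym)) = Re (mtrace (T P * cost_sym))"
    by auto
  then show "Re (mtrace (P * cost_sym)) \<in> (\<lambda>P. Re (mtrace (P * cost_sym))) ` couplings \<rho>' \<omega>'"
    by (rule rev_image_eqI)
qed

definition proj2 :: "complex \<Rightarrow> complex \<Rightarrow> complex mat" where
  "proj2 a0 a1 = mat 2 2 (\<lambda>(i,j). (if i = 0 then a0 else a1) * cnj (if j = 0 then a0 else a1))"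

lemma proj2_carrier [simp]: "proj2 a0 a1 \<in> carrier_mat 2 2"
  by (simp add: proj2_def)

lemma pure2_iff_proj2:
  "\<sigma> \<in> pure2 \<longleftrightarrow> (\<exists>a0 a1. a0 * cnj a0 + a1 * cnj a1 = 1 \<and> \<sigma> = proj2 a0 a1)"
proof
  assume "\<sigma> \<in> pure2"
  then obtain \<psi> where \<psi>: "\<psi> \<in> carrier_vec 2" "(\<Sum>i<2. cmod (\<psi> $ i)^2) = 1"
    "\<sigma> = mat 2 2 (\<lambda>(i,j). \<psi> $ i * cnj (\<psi> $ j))" unfolding pure2_def by blast
  have "complex_of_real (cmod (\<psi> $ 0)^2 + cmod (\<psi> $ 1)^2) = 1"
    using \<psi>(2) by (simp add: sum_small)
  hence "\<psi> $ 0 * cnj (\<psi> $ 0) + \<psi> $ 1 * cnj (\<psi> $ 1) = 1"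
    by (simp add: complex_norm_square[symmetric])
  moreover have "\<sigma> = proj2 (\<psi> $ 0) (\<psi> $ 1)"
    unfolding \<psi>(3) proj2_def by (rule eq_matI) (auto simp: less_Suc_eq numeral_eq_Suc)
  ultimately show "\<exists>a0 a1. a0 * cnj a0 + a1 * cnj a1 = 1 \<and> \<sigma> = proj2 a0 a1" by blast
next
  assume "\<exists>a0 a1. a0 * cnj a0 + a1 * cnj a1 = 1 \<and> \<sigma> = proj2 a0 a1"
  then obtain a0 a1 where n: "a0 * cnj a0 + a1 * cnj a1 = 1" and \<sigma>: "\<sigma> = proj2 a0 a1" by blast
  let ?\<psi> = "vec 2 (\<lambda>i. if i = 0 then a0 else a1)"
  have "complex_of_real (cmod a0 ^ 2 + cmod a1 ^ 2) = 1"
    using n by (simp only: of_real_add complex_norm_square)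
  hence "(\<Sum>i<2. cmod (?\<psi> $ i)^2) = 1" by (simp add: sum_small del: of_real_add)
  moreover have "\<sigma> = mat 2 2 (\<lambda>(i,j). ?\<psi> $ i * cnj (?\<psi> $ j))"
    unfolding \<sigma> proj2_def by (rule eq_matI) auto
  ultimately show "\<sigma> \<in> pure2" unfolding pure2_def by (intro CollectI bexI[of _ ?\<psi>]) auto
qed

lemma pure2_proj2E:
  assumes "\<sigma> \<in> pure2"
  obtains a0 a1 where "a0 * cnj a0 + a1 * cnj a1 = 1" "\<sigma> = proj2 a0 a1"
  using assms pure2_iff_proj2 by blast

lemma states2_carrier: "\<rho> \<in> states2 \<Longrightarrow> \<rho> \<in> carrier_mat 2 2"
  by (simp add: states2_def density_def psd_def)

lemma states2_trace: "\<rho> \<in> states2 \<Longrightarrow> \<rho> $$ (0,0) + \<rho> $$ (1,1) = 1"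
  using states2_carrier[of \<rho>] by (simp add: states2_def density_def mtrace_def sum_small)

lemma states2_psd: "\<rho> \<in> states2 \<Longrightarrow> psd 2 \<rho>"
  by (simp add: states2_def density_def)

lemma proj2_in_states2:
  assumes "a0 * cnj a0 + a1 * cnj a1 = 1"
  shows "proj2 a0 a1 \<in> states2"
proof -
  have "sesq 2 (proj2 a0 a1) v v = complex_of_real ((cmod (cnj (v $ 0) * a0 + cnj (v $ 1) * a1))^2)"
    for v
    unfolding complex_norm_square by (simp add: sesq_def proj2_def sum_small algebra_simps)
  hence "psd 2 (proj2 a0 a1)" by (simp add: psd_iff_sesq)
  with assms show ?thesis by (simp add: states2_def density_def mtrace_def proj2_def sum_small)
qed

lemma pure2_subset_states2: "\<sigma> \<in> pure2 \<Longrightarrow> \<sigma> \<in> states2"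
  by (metis pure2_proj2E proj2_in_states2)

subsection \<open>Couplings with a pure state\<close>

lemma couplings_carrier: "P \<in> couplings \<rho> \<omega> \<Longrightarrow> P \<in> carrier_mat 4 4"
  by (simp add: couplings_def density_def psd_def)

lemma rank_one_block_entries:
  fixes x00 x01 x10 x11 c0 c1 d0 d1 :: complex
  assumes "c0*d0 + c1*d1 = 1"
    and "x01*d0 = x00*d1" "x11*d0 = x10*d1" "c0*x10 = c1*x00" "c0*x11 = c1*x01"
  shows "x00 = c0*d0*(x00+x11)" "x01 = c0*d1*(x00+x11)"
    "x10 = c1*d0*(x00+x11)" "x11 = c1*d1*(x00+x11)"
proof -
  have "x00 - c0*d0*(x00+x11) = x00*(1 - (c0*d0+c1*d1)) + d1*(c1*x00 - c0*x10) + c0*(x10*d1 - x11*d0)"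
    "x01 - c0*d1*(x00+x11) = x01*(1 - (c0*d0+c1*d1)) + c0*(x01*d0 - x00*d1) + d1*(c1*x01 - c0*x11)"
    "x10 - c1*d0*(x00+x11) = x10*(1 - (c0*d0+c1*d1)) + d0*(c0*x10 - c1*x00) + c1*(x10*d1 - x11*d0)"
    "x11 - c1*d1*(x00+x11) = x11*(1 - (c0*d0+c1*d1)) + d0*(c0*x11 - c1*x01) + c1*(x01*d0 - x00*d1)"
    by (simp_all add: algebra_simps)
  then show "x00 = c0*d0*(x00+x11)" "x01 = c0*d1*(x00+x11)"
    "x10 = c1*d0*(x00+x11)" "x11 = c1*d1*(x00+x11)"
    unfolding assms by (simp_all only: right_minus_eq diff_self mult_zero_right add_0_right add_0)
qed

text \<open>If the second marginal is the pure state \<open>|c\<rangle>\<langle>c|\<close>, the two vectors \<open>c\<^sup>\<perp> \<otimes> e\<^sub>k\<^sup>*\<close>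
  are isotropic for the coupling, hence in its kernel.\<close>

lemma coupling_with_pure_kernel:
  assumes cp: "P \<in> couplings \<rho> (proj2 c0 c1)" and "b \<in> {0,1,2,3}"
  shows "c0 * P $$ (2,b) = c1 * P $$ (0,b)" "c0 * P $$ (3,b) = c1 * P $$ (1,b)"
    "P $$ (b,2) * cnj c0 = P $$ (b,0) * cnj c1" "P $$ (b,3) * cnj c0 = P $$ (b,1) * cnj c1"
proof -
  from cp have psd: "psd 4 P" and pd: "ptr_dual P = proj2 c0 c1"
    unfolding couplings_def density_def by auto
  have pd_entries: "P $$ (0,0) + P $$ (1,1) = c0 * cnj c0" "P $$ (0,2) + P $$ (1,3) = c0 * cnj c1"
      "P $$ (2,0) + P $$ (3,1) = c1 * cnj c0" "P $$ (2,2) + P $$ (3,3) = c1 * cnj c1"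
    using arg_cong[OF pd, of "\<lambda>M. M $$ (0,0)"] arg_cong[OF pd, of "\<lambda>M. M $$ (0,1)"]
      arg_cong[OF pd, of "\<lambda>M. M $$ (1,0)"] arg_cong[OF pd, of "\<lambda>M. M $$ (1,1)"]
    by (simp_all add: ptr_dual_def proj2_def sum_small)
  define v0 where "v0 = vec 4 (\<lambda>a. if a = 0 then - cnj c1 else if a = 2 then cnj c0 else 0)"
  define v1 where "v1 = vec 4 (\<lambda>a. if a = 1 then - cnj c1 else if a = 3 then cnj c0 else 0)"
  have vc: "v0 \<in> carrier_vec 4" "v1 \<in> carrier_vec 4" by (simp_all add: v0_def v1_def)
  have "sesq 4 P v0 v0 + sesq 4 P v1 v1 =
     c1 * cnj c1 * (P $$ (0,0) + P $$ (1,1)) - c1 * cnj c0 * (P $$ (0,2) + P $$ (1,3))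
     - c0 * cnj c1 * (P $$ (2,0) + P $$ (3,1)) + c0 * cnj c0 * (P $$ (2,2) + P $$ (3,3))"
    by (simp add: sesq_def v0_def v1_def sum_small algebra_simps)
  also have "\<dots> = 0" unfolding pd_entries by (simp add: algebra_simps)
  finally have "sesq 4 P v0 v0 = 0" "sesq 4 P v1 v1 = 0"
    using psd_sesq[OF psd vc(1)] psd_sesq[OF psd vc(2)] by (auto simp: complex_eq_iff)
  note kernel = psd_isotropic_kernel[OF psd vc(1) _ this(1)] psd_isotropic_kernel[OF psd vc(2) _ this(2)]
  let ?e = "\<lambda>b. vec 4 (\<lambda>a. if a = b then 1 else 0) :: complex vec"
  show "c0 * P $$ (2,b) = c1 * P $$ (0,b)" "c0 * P $$ (3,b) = c1 * P $$ (1,b)"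
    "P $$ (b,2) * cnj c0 = P $$ (b,0) * cnj c1" "P $$ (b,3) * cnj c0 = P $$ (b,1) * cnj c1"
    using assms(2) kernel[of "?e 0"] kernel[of "?e 1"] kernel[of "?e 2"] kernel[of "?e 3"]
    by (auto simp: sesq_def v0_def v1_def sum_small algebra_simps)
qed

text \<open>Consequently the coupling agrees with \<open>|c\<rangle>\<langle>c| \<otimes> \<rho>\<^sup>T\<close> on the entries seen by the cost.\<close>

lemma coupling_with_pure_entries:
  assumes cp: "P \<in> couplings \<rho> (proj2 c0 c1)" and n: "c0 * cnj c0 + c1 * cnj c1 = 1"
    and rc: "\<rho> \<in> carrier_mat 2 2"
  shows "P $$ (0,0) = c0 * cnj c0 * \<rho> $$ (0,0)" "P $$ (0,3) = c0 * cnj c1 * \<rho> $$ (1,0)"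
    "P $$ (3,0) = c1 * cnj c0 * \<rho> $$ (0,1)" "P $$ (3,3) = c1 * cnj c1 * \<rho> $$ (1,1)"
proof -
  from cp have ph: "ptr_H P = transpose_mat \<rho>" unfolding couplings_def by auto
  have ph_entries: "P $$ (0,0) + P $$ (2,2) = \<rho> $$ (0,0)" "P $$ (0,1) + P $$ (2,3) = \<rho> $$ (1,0)"
      "P $$ (1,0) + P $$ (3,2) = \<rho> $$ (0,1)" "P $$ (1,1) + P $$ (3,3) = \<rho> $$ (1,1)"
    using arg_cong[OF ph, of "\<lambda>M. M $$ (0,0)"] arg_cong[OF ph, of "\<lambda>M. M $$ (0,1)"]
      arg_cong[OF ph, of "\<lambda>M. M $$ (1,0)"] arg_cong[OF ph, of "\<lambda>M. M $$ (1,1)"] rc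
    by (simp_all add: ptr_H_def sum_small numeral_2_eq_2[symmetric] numeral_3_eq_3[symmetric])
  note R = coupling_with_pure_kernel[OF cp]
  have "P $$ (0,0) = c0 * cnj c0 * (P $$ (0,0) + P $$ (2,2))"
      "P $$ (0,3) = c0 * cnj c1 * (P $$ (0,1) + P $$ (2,3))"
      "P $$ (3,0) = c1 * cnj c0 * (P $$ (1,0) + P $$ (3,2))"
      "P $$ (3,3) = c1 * cnj c1 * (P $$ (1,1) + P $$ (3,3))"
    by (rule rank_one_block_entries[OF n]; use R in auto)+
  then show "P $$ (0,0) = c0 * cnj c0 * \<rho> $$ (0,0)" "P $$ (0,3) = c0 * cnj c1 * \<rho> $$ (1,0)"
      "P $$ (3,0) = c1 * cnj c0 * \<rho> $$ (0,1)" "P $$ (3,3) = c1 * cnj c1 * \<rho> $$ (1,1)"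
    unfolding ph_entries .
qed

lemma coupling_with_pure_cost:
  assumes cp: "P \<in> couplings \<rho> (proj2 c0 c1)" and n: "c0 * cnj c0 + c1 * cnj c1 = 1"
    and rc: "\<rho> \<in> carrier_mat 2 2"
  shows "mtrace (P * cost_sym) = 8 - 4 * mtrace (\<rho> * proj2 c0 c1)"
proof -
  have "P \<in> carrier_mat 4 4" "mtrace P = 1"
    using cp by (auto simp: couplings_def density_def psd_def)
  then show ?thesis
    unfolding mtrace_mult_cost_sym[OF \<open>P \<in> carrier_mat 4 4\<close>] sesq_max_ent[OF \<open>P \<in> carrier_mat 4 4\<close>]
      coupling_with_pure_entries[OF assms]
    using rc by (simp add: mtrace_def proj2_def scalar_prod_def sum_small algebra_simps)
qed

lemma product_coupling_with_pure:
  assumes rs: "\<rho> \<in> states2" and n: "c0 * cnj c0 + c1 * cnj c1 = 1"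
  shows "kron2 (proj2 c0 c1) (transpose_mat \<rho>) \<in> couplings \<rho> (proj2 c0 c1)"
proof -
  have rc: "\<rho> \<in> carrier_mat 2 2" using states2_carrier[OF rs] .
  have rt: "\<rho> $$ (0,0) + \<rho> $$ (1,1) = 1" using states2_trace[OF rs] .
  let ?K = "kron2 (proj2 c0 c1) (transpose_mat \<rho>)"
  have "sesq 4 ?K v v = sesq 2 \<rho> (vec 2 (\<lambda>k. c0 * cnj (v $ k) + c1 * cnj (v $ (2+k))))
                                  (vec 2 (\<lambda>k. c0 * cnj (v $ k) + c1 * cnj (v $ (2+k))))" for v
    using rc by (simp add: sesq_def kron2_def proj2_def sum_small algebra_simps
        numeral_2_eq_2[symmetric] numeral_3_eq_3[symmetric])
  then have psd: "psd 4 ?K"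
    using psd_sesq[OF states2_psd[OF rs]] by (simp add: psd_iff_sesq kron2_def)
  have "mtrace ?K = (c0 * cnj c0 + c1 * cnj c1) * (\<rho> $$ (0,0) + \<rho> $$ (1,1))"
    using rc by (simp add: mtrace_def kron2_def proj2_def sum_small algebra_simps)
  then have tr: "mtrace ?K = 1" using n rt by simp
  have n_scaled: "c0 * (cnj c0 * x) + c1 * (cnj c1 * x) = x" for x
  proof -
    have "c0 * (cnj c0 * x) + c1 * (cnj c1 * x) = (c0 * cnj c0 + c1 * cnj c1) * x"
      by (simp add: algebra_simps)
    then show ?thesis using n by simp
  qed
  have pd: "ptr_dual ?K = proj2 c0 c1"
    by (rule mat2_eqI) (use rc rt in \<open>auto simp: ptr_dual_def kron2_def proj2_def sum_small algebra_simps
          numeral_2_eq_2[symmetric] numeral_3_eq_3[symmetric] distrib_left[symmetric]\<close>)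
  have ph: "ptr_H ?K = transpose_mat \<rho>"
    by (rule mat2_eqI) (use rc in \<open>auto simp: ptr_H_def kron2_def proj2_def sum_small algebra_simps
          numeral_2_eq_2[symmetric] numeral_3_eq_3[symmetric] n_scaled\<close>)
  show ?thesis unfolding couplings_def density_def using psd tr pd ph by simp
qed

lemma QW2_Pauli_pure:
  assumes "\<rho> \<in> states2" "\<sigma> \<in> pure2"
  shows "QW2 [sigma1, sigma2, sigma3] \<rho> \<sigma> = 8 - 4 * Re (mtrace (\<rho> * \<sigma>))"
proof -
  obtain c0 c1 where n: "c0 * cnj c0 + c1 * cnj c1 = 1" and \<sigma>: "\<sigma> = proj2 c0 c1"
    using pure2_proj2E[OF assms(2)] .
  have "coupling_costs \<rho> \<sigma> = {8 - 4 * Re (mtrace (\<rho> * \<sigma>))}"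
    using product_coupling_with_pure[OF assms(1) n]
      coupling_with_pure_cost[OF _ n states2_carrier[OF assms(1)]]
    unfolding \<sigma> coupling_costs_def by auto
  then show ?thesis by (simp add: QW2_Pauli)
qed

subsection \<open>Invariance under unitary and anti-unitary conjugation\<close>

lemma unitary2_carrier: "unitary2 V \<Longrightarrow> V \<in> carrier_mat 2 2"
  by (simp add: unitary2_def)

lemma unitary2_adj: "unitary2 V \<Longrightarrow> unitary2 (adj V)"
  unfolding unitary2_def by auto

lemma unitary_conj_carrier: "unitary2 V \<Longrightarrow> \<rho> \<in> carrier_mat 2 2 \<Longrightarrow> unitary_conj V \<rho> \<in> carrier_mat 2 2"
  unfolding unitary2_def unitary_conj_def by auto

lemma unitary2_adj_mult_cancel:
  assumes V: "unitary2 V" and X: "X \<in> carrier_mat 2 n"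
  shows "adj V * (V * X) = X"
proof -
  have Vc: "V \<in> carrier_mat 2 2" and VV: "adj V * V = 1\<^sub>m 2" using V unfolding unitary2_def by auto
  have "adj V * (V * X) = (adj V * V) * X" using Vc X by (metis adj_carrier assoc_mult_mat)
  then show ?thesis using VV X by simp
qed

lemma unitary_conj_adj_cancel:
  assumes V: "unitary2 V" and R: "\<rho> \<in> carrier_mat 2 2"
  shows "unitary_conj (adj V) (unitary_conj V \<rho>) = \<rho>"
proof -
  have Vc: "V \<in> carrier_mat 2 2" and VV: "adj V * V = 1\<^sub>m 2" using V unfolding unitary2_def by auto
  have "unitary_conj (adj V) (unitary_conj V \<rho>) = adj V * (V * (\<rho> * (adj V * V)))"
    using Vc R by (simp add: unitary_conj_def assoc_mult_mat[of _ 2 2 _ 2 _ 2])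
  also have "\<dots> = \<rho>" using VV R unitary2_adj_mult_cancel[OF V R] by simp
  finally show ?thesis .
qed

lemma unitary_conj_mult:
  assumes V: "unitary2 V" and A: "A \<in> carrier_mat 2 2" and B: "B \<in> carrier_mat 2 2"
  shows "unitary_conj V A * unitary_conj V B = unitary_conj V (A * B)"
proof -
  have Vc: "V \<in> carrier_mat 2 2" using unitary2_carrier[OF V] .
  have "unitary_conj V A * unitary_conj V B = V * (A * (adj V * (V * (B * adj V))))"
    using Vc A B by (simp add: unitary_conj_def assoc_mult_mat[of _ 2 2 _ 2 _ 2])
  also have "\<dots> = V * (A * (B * adj V))"
    using unitary2_adj_mult_cancel[OF V mult_carrier_mat[OF B adj_carrier[OF Vc]]] by simp
  also have "\<dots> = unitary_conj V (A * B)"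
    using Vc A B by (simp add: unitary_conj_def assoc_mult_mat[of _ 2 2 _ 2 _ 2])
  finally show ?thesis .
qed

lemma mtrace_unitary_conj:
  "unitary2 V \<Longrightarrow> \<rho> \<in> carrier_mat 2 2 \<Longrightarrow> mtrace (unitary_conj V \<rho>) = mtrace \<rho>"
  unfolding unitary2_def unitary_conj_def by (blast intro: mtrace_conj_isometry)

lemma states2_unitary_conj: "unitary2 V \<Longrightarrow> \<rho> \<in> states2 \<Longrightarrow> unitary_conj V \<rho> \<in> states2"
  using mtrace_unitary_conj[OF _ states2_carrier] psd_conj[of 2 \<rho> V]
  unfolding states2_def density_def unitary_conj_def unitary2_def by auto

lemma states2_cconj: "\<rho> \<in> states2 \<Longrightarrow> cconj \<rho> \<in> states2"
  using psd_cconj[of 2 \<rho>] mtrace_cconj[OF states2_carrier]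
  unfolding states2_def density_def by auto

lemma antiunitary_conj_eq: "antiunitary_conj V \<rho> = unitary_conj V (cconj \<rho>)"
  by (simp add: antiunitary_conj_def unitary_conj_def)

lemma states2_antiunitary_conj: "unitary2 V \<Longrightarrow> \<rho> \<in> states2 \<Longrightarrow> antiunitary_conj V \<rho> \<in> states2"
  by (simp add: antiunitary_conj_eq states2_unitary_conj states2_cconj)

text \<open>Conjugating states by \<open>V\<close> is matched on \<open>H \<otimes> H\<^sup>*\<close> by \<open>V \<otimes> (V\<^sup>T)\<^sup>-\<^sup>1 = V \<otimes> cconj V\<close>;
  it fixes \<open>max_ent\<close> and hence the cost.\<close>

definition lift_unitary :: "complex mat \<Rightarrow> complex mat" where
  "lift_unitary V = kron2 V (cconj V)"

lemma lift_unitary_carrier [simp]: "lift_unitary V \<in> carrier_mat 4 4"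
  by (simp add: lift_unitary_def kron2_def)

lemma lift_unitary_dims [simp]: "dim_row (lift_unitary V) = 4" "dim_col (lift_unitary V) = 4"
  by (simp_all add: lift_unitary_def kron2_def)

lemma lift_unitary_index:
  "V \<in> carrier_mat 2 2 \<Longrightarrow> a < 4 \<Longrightarrow> b < 4 \<Longrightarrow>
   lift_unitary V $$ (a,b) = V $$ (a div 2, b div 2) * cnj (V $$ (a mod 2, b mod 2))"
  by (simp add: lift_unitary_def kron2_def)

lemma unitary2_columns:
  assumes "unitary2 V" "m < 2" "m' < 2"
  shows "cnj (V $$ (0,m)) * V $$ (0,m') + cnj (V $$ (1,m)) * V $$ (1,m') = (if m = m' then 1 else 0)"
proof -
  have "(adj V * V) $$ (m,m') = (if m = m' then 1 else 0)"
    using assms unfolding unitary2_def by auto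
  then show ?thesis
    using assms unitary2_carrier[OF assms(1)] by (simp add: scalar_prod_def sum_small)
qed

lemma ptr_dual_carrier [simp]: "ptr_dual P \<in> carrier_mat 2 2"
  by (simp add: ptr_dual_def)

lemma ptr_H_carrier [simp]: "ptr_H P \<in> carrier_mat 2 2"
  by (simp add: ptr_H_def)

lemma ptr_dual_lift_unitary:
  assumes P: "P \<in> carrier_mat 4 4" and V: "unitary2 V"
  shows "ptr_dual (lift_unitary V * P * adj (lift_unitary V)) = unitary_conj V (ptr_dual P)"
proof (rule mat2_eqI)
  have Vc: "V \<in> carrier_mat 2 2" using unitary2_carrier[OF V] .
  show "unitary_conj V (ptr_dual P) \<in> carrier_mat 2 2"
    using V by (simp add: unitary_conj_carrier)
  show "\<forall>i\<in>{0, 1}. \<forall>j\<in>{0, 1}. ptr_dual (lift_unitary V * P * adj (lift_unitary V)) $$ (i, j) =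
                              unitary_conj V (ptr_dual P) $$ (i, j)"
  proof (intro ballI)
    fix i j :: nat assume "i \<in> {0,1}" "j \<in> {0,1}"
    then have ij: "i < 2" "j < 2" by auto
    have "ptr_dual (lift_unitary V * P * adj (lift_unitary V)) $$ (i,j) =
      (\<Sum>k<2. (lift_unitary V * P * adj (lift_unitary V)) $$ (2*i+k, 2*j+k))"
      using ij by (simp add: ptr_dual_def)
    also have "\<dots> =
      (\<Sum>k<2. \<Sum>c<4. \<Sum>l<4. lift_unitary V $$ (2*i+k,c) * P $$ (c,l) * cnj (lift_unitary V $$ (2*j+k,l)))"
      using ij by (intro sum.cong refl conj_mult_index[OF P]) auto
    also have "\<dots> = (\<Sum>c<4. \<Sum>l<4. V $$ (i,c div 2) * cnj (V $$ (j,l div 2)) * P $$ (c,l) *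
        (cnj (V $$ (0,c mod 2)) * V $$ (0,l mod 2) + cnj (V $$ (1,c mod 2)) * V $$ (1,l mod 2)))"
      using ij by (elim less_2_cases_nat) (simp_all add: sum_small lift_unitary_index Vc algebra_simps)
    also have "\<dots> = (\<Sum>c<4. \<Sum>l<4. V $$ (i,c div 2) * cnj (V $$ (j,l div 2)) * P $$ (c,l) *
        (if c mod 2 = l mod 2 then 1 else 0))"
      by (simp add: unitary2_columns[OF V] flip: One_nat_def)
    also have "\<dots> = unitary_conj V (ptr_dual P) $$ (i,j)"
      unfolding unitary_conj_def conj_mult_index[OF ptr_dual_carrier Vc ij]
      using ij by (elim less_2_cases_nat)
        (simp_all add: sum_small ptr_dual_def algebra_simps numeral_2_eq_2[symmetric] numeral_3_eq_3[symmetric])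
    finally show "ptr_dual (lift_unitary V * P * adj (lift_unitary V)) $$ (i,j) =
                  unitary_conj V (ptr_dual P) $$ (i,j)" .
  qed
qed simp

lemma ptr_H_lift_unitary:
  assumes P: "P \<in> carrier_mat 4 4" and V: "unitary2 V"
  shows "ptr_H (lift_unitary V * P * adj (lift_unitary V)) = cconj V * ptr_H P * adj (cconj V)"
proof (rule mat2_eqI)
  have Vc: "V \<in> carrier_mat 2 2" using unitary2_carrier[OF V] .
  have CV: "cconj V \<in> carrier_mat 2 2" using Vc by simp
  show "cconj V * ptr_H P * adj (cconj V) \<in> carrier_mat 2 2"
    by (meson CV adj_carrier mult_carrier_mat ptr_H_carrier)
  show "\<forall>i\<in>{0, 1}. \<forall>j\<in>{0, 1}. ptr_H (lift_unitary V * P * adj (lift_unitary V)) $$ (i, j) =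
                              (cconj V * ptr_H P * adj (cconj V)) $$ (i, j)"
  proof (intro ballI)
    fix i j :: nat assume "i \<in> {0,1}" "j \<in> {0,1}"
    then have ij: "i < 2" "j < 2" by auto
    have "ptr_H (lift_unitary V * P * adj (lift_unitary V)) $$ (i,j) =
      (\<Sum>k<2. (lift_unitary V * P * adj (lift_unitary V)) $$ (2*k+i, 2*k+j))"
      using ij by (simp add: ptr_H_def)
    also have "\<dots> =
      (\<Sum>k<2. \<Sum>c<4. \<Sum>l<4. lift_unitary V $$ (2*k+i,c) * P $$ (c,l) * cnj (lift_unitary V $$ (2*k+j,l)))"
      using ij by (intro sum.cong refl conj_mult_index[OF P]) auto
    also have "\<dots> = (\<Sum>c<4. \<Sum>d<4. cnj (V $$ (i,c mod 2)) * V $$ (j,d mod 2) * P $$ (c,d) *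
        (cnj (V $$ (0,d div 2)) * V $$ (0,c div 2) + cnj (V $$ (1,d div 2)) * V $$ (1,c div 2)))"
      using ij by (elim less_2_cases_nat) (simp_all add: sum_small lift_unitary_index Vc algebra_simps)
    also have "\<dots> = (\<Sum>c<4. \<Sum>d<4. cnj (V $$ (i,c mod 2)) * V $$ (j,d mod 2) * P $$ (c,d) *
        (if d div 2 = c div 2 then 1 else 0))"
      by (intro sum.cong refl) (simp add: unitary2_columns[OF V] flip: One_nat_def)
    also have "\<dots> = (cconj V * ptr_H P * adj (cconj V)) $$ (i,j)"
      unfolding conj_mult_index[OF ptr_H_carrier CV ij]
      using ij Vc by (elim less_2_cases_nat)
        (simp_all add: sum_small ptr_H_def algebra_simps numeral_2_eq_2[symmetric] numeral_3_eq_3[symmetric])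
    finally show "ptr_H (lift_unitary V * P * adj (lift_unitary V)) $$ (i,j) =
                  (cconj V * ptr_H P * adj (cconj V)) $$ (i,j)" .
  qed
qed simp

lemma transpose_unitary_conj:
  assumes V: "V \<in> carrier_mat 2 2" and R: "\<rho> \<in> carrier_mat 2 2"
  shows "transpose_mat (unitary_conj V \<rho>) = cconj V * transpose_mat \<rho> * adj (cconj V)"
proof (rule mat2_eqI)
  have CV: "cconj V \<in> carrier_mat 2 2" and RT: "transpose_mat \<rho> \<in> carrier_mat 2 2" using V R by auto
  show "transpose_mat (unitary_conj V \<rho>) \<in> carrier_mat 2 2"
    "cconj V * transpose_mat \<rho> * adj (cconj V) \<in> carrier_mat 2 2"
    using V R CV by (auto simp: unitary_conj_def)
  show "\<forall>i\<in>{0, 1}. \<forall>j\<in>{0, 1}. transpose_mat (unitary_conj V \<rho>) $$ (i, j) =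
                              (cconj V * transpose_mat \<rho> * adj (cconj V)) $$ (i, j)"
    using V R conj_mult_index[OF R V] conj_mult_index[OF RT CV]
    by (auto simp: unitary_conj_def sum_small algebra_simps)
qed

lemma lift_unitary_isometry:
  assumes V: "unitary2 V"
  shows "adj (lift_unitary V) * lift_unitary V = 1\<^sub>m 4"
proof (rule eq_matI)
  have Vc: "V \<in> carrier_mat 2 2" using unitary2_carrier[OF V] .
  fix a b assume "a < dim_row (1\<^sub>m 4)" "b < dim_col (1\<^sub>m 4)"
  then have ab: "a < 4" "b < 4" by auto
  have "(adj (lift_unitary V) * lift_unitary V) $$ (a,b) =
      (\<Sum>c<4. cnj (lift_unitary V $$ (c,a)) * lift_unitary V $$ (c,b))"
    using ab by (simp add: scalar_prod_def atLeast0LessThan)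
  also have "\<dots> =
      (cnj (V $$ (0,a div 2)) * V $$ (0,b div 2) + cnj (V $$ (1,a div 2)) * V $$ (1,b div 2)) *
      cnj (cnj (V $$ (0,a mod 2)) * V $$ (0,b mod 2) + cnj (V $$ (1,a mod 2)) * V $$ (1,b mod 2))"
    using ab by (simp add: sum_small lift_unitary_index Vc algebra_simps)
  also have "\<dots> = (if a div 2 = b div 2 then 1 else 0) * (if a mod 2 = b mod 2 then 1 else 0)"
    using ab by (simp add: unitary2_columns[OF V] flip: One_nat_def)
  also have "\<dots> = 1\<^sub>m 4 $$ (a,b)"
    using ab by (auto, metis div_mult_mod_eq)
  finally show "(adj (lift_unitary V) * lift_unitary V) $$ (a,b) = 1\<^sub>m 4 $$ (a,b)" .
qed auto

lemma lift_unitary_max_ent: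
  assumes V: "unitary2 V"
  shows "adj (lift_unitary V) *\<^sub>v max_ent = max_ent"
proof (rule eq_vecI)
  have Vc: "V \<in> carrier_mat 2 2" using unitary2_carrier[OF V] .
  fix c assume "c < dim_vec max_ent"
  then have c: "c < 4" by (simp add: max_ent_def)
  have "(adj (lift_unitary V) *\<^sub>v max_ent) $ c =
      cnj (V $$ (0,c div 2)) * V $$ (0,c mod 2) + cnj (V $$ (1,c div 2)) * V $$ (1,c mod 2)"
    using c by (simp add: scalar_prod_def sum_small max_ent_def lift_unitary_index Vc)
  also have "\<dots> = (if c div 2 = c mod 2 then 1 else 0)"
    using c by (simp add: unitary2_columns[OF V] flip: One_nat_def)
  also have "\<dots> = max_ent $ c"
  proof -
    have "c = 0 \<or> c = 1 \<or> c = 2 \<or> c = 3" using c by auto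
    then show ?thesis by (auto simp: max_ent_def)
  qed
  finally show "(adj (lift_unitary V) *\<^sub>v max_ent) $ c = max_ent $ c" .
qed (simp add: max_ent_def)

lemma coupling_unitary_conj:
  assumes V: "unitary2 V" and R: "\<rho> \<in> carrier_mat 2 2" and P: "P \<in> couplings \<rho> \<omega>"
  defines "W \<equiv> lift_unitary V"
  shows "W * P * adj W \<in> couplings (unitary_conj V \<rho>) (unitary_conj V \<omega>)"
    "Re (mtrace (W * P * adj W * cost_sym)) = Re (mtrace (P * cost_sym))"
proof -
  have Vc: "V \<in> carrier_mat 2 2" using unitary2_carrier[OF V] .
  have Pc: "P \<in> carrier_mat 4 4" using couplings_carrier[OF P] .
  from P have den: "psd 4 P" "mtrace P = 1" and pd: "ptr_dual P = \<omega>" and ph: "ptr_H P = transpose_mat \<rho>"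
    unfolding couplings_def density_def by auto
  have tr: "mtrace (W * P * adj W) = mtrace P"
    unfolding W_def using mtrace_conj_isometry[OF _ lift_unitary_isometry[OF V] Pc] by simp
  show "W * P * adj W \<in> couplings (unitary_conj V \<rho>) (unitary_conj V \<omega>)"
    unfolding couplings_def density_def W_def
    using psd_conj[OF den(1) lift_unitary_carrier] tr den(2) ptr_dual_lift_unitary[OF Pc V]
      ptr_H_lift_unitary[OF Pc V] pd ph transpose_unitary_conj[OF Vc R]
    by (simp add: W_def)
  have "sesq 4 (W * P * adj W) max_ent max_ent = sesq 4 P max_ent max_ent"
    unfolding W_def using sesq_conj[OF Pc lift_unitary_carrier] lift_unitary_max_ent[OF V]
    by (simp add: max_ent_def)
  moreover have "W * P * adj W \<in> carrier_mat 4 4"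
    by (metis Pc W_def adj_carrier lift_unitary_carrier mult_carrier_mat)
  ultimately show "Re (mtrace (W * P * adj W * cost_sym)) = Re (mtrace (P * cost_sym))"
    using Pc tr by (simp add: mtrace_mult_cost_sym)
qed

lemma coupling_cconj:
  assumes P: "P \<in> couplings \<rho> \<omega>"
  shows "cconj P \<in> couplings (cconj \<rho>) (cconj \<omega>)"
    "Re (mtrace (cconj P * cost_sym)) = Re (mtrace (P * cost_sym))"
proof -
  have Pc: "P \<in> carrier_mat 4 4" using couplings_carrier[OF P] .
  from P have den: "psd 4 P" "mtrace P = 1" and pd: "ptr_dual P = \<omega>" and ph: "ptr_H P = transpose_mat \<rho>"
    unfolding couplings_def density_def by auto
  have "ptr_dual (cconj P) = cconj (ptr_dual P)" "ptr_H (cconj P) = cconj (ptr_H P)"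
    using Pc by (auto intro!: eq_matI simp: ptr_dual_def ptr_H_def cconj_def)
  then show "cconj P \<in> couplings (cconj \<rho>) (cconj \<omega>)"
    unfolding couplings_def density_def
    using psd_cconj[OF den(1)] mtrace_cconj[OF Pc] den(2) pd ph by (simp add: transpose_cconj)
  show "Re (mtrace (cconj P * cost_sym)) = Re (mtrace (P * cost_sym))"
    using Pc mtrace_cconj[OF Pc] by (simp add: mtrace_mult_cost_sym sesq_max_ent)
qed

lemma QW2_Pauli_unitary_conj:
  assumes V: "unitary2 V" and R: "\<rho> \<in> carrier_mat 2 2" and O: "\<omega> \<in> carrier_mat 2 2"
  shows "QW2 [sigma1, sigma2, sigma3] (unitary_conj V \<rho>) (unitary_conj V \<omega>) =
         QW2 [sigma1, sigma2, sigma3] \<rho> \<omega>"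
proof -
  have "coupling_costs \<rho> \<omega> \<subseteq> coupling_costs (unitary_conj V \<rho>) (unitary_conj V \<omega>)"
    if "unitary2 V" "\<rho> \<in> carrier_mat 2 2" for V \<rho> \<omega>
  proof (rule coupling_costs_subset)
    fix P assume "P \<in> couplings \<rho> \<omega>"
    from coupling_unitary_conj[OF that this]
    show "lift_unitary V * P * adj (lift_unitary V) \<in> couplings (unitary_conj V \<rho>) (unitary_conj V \<omega>) \<and>
      Re (mtrace (lift_unitary V * P * adj (lift_unitary V) * cost_sym)) = Re (mtrace (P * cost_sym))" ..
  qed
  note sub = this
  have "coupling_costs \<rho> \<omega> = coupling_costs (unitary_conj V \<rho>) (unitary_conj V \<omega>)"
  proof (rule equalityI)
    show "coupling_costs \<rho> \<omega> \<subseteq> coupling_costs (unitary_conj V \<rho>) (unitary_conj V \<omega>)"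
      by (rule sub[OF V R])
    show "coupling_costs (unitary_conj V \<rho>) (unitary_conj V \<omega>) \<subseteq> coupling_costs \<rho> \<omega>"
      using sub[OF unitary2_adj[OF V] unitary_conj_carrier[OF V R], of "unitary_conj V \<omega>"]
      unfolding unitary_conj_adj_cancel[OF V R] unitary_conj_adj_cancel[OF V O] .
  qed
  then show ?thesis by (simp add: QW2_Pauli)
qed

lemma QW2_Pauli_cconj:
  "QW2 [sigma1, sigma2, sigma3] (cconj \<rho>) (cconj \<omega>) = QW2 [sigma1, sigma2, sigma3] \<rho> \<omega>"
proof -
  have "coupling_costs \<rho> \<omega> \<subseteq> coupling_costs (cconj \<rho>) (cconj \<omega>)" for \<rho> \<omega>
  proof (rule coupling_costs_subset)
    fix P assume "P \<in> couplings \<rho> \<omega>"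
    from coupling_cconj[OF this] show "cconj P \<in> couplings (cconj \<rho>) (cconj \<omega>) \<and>
      Re (mtrace (cconj P * cost_sym)) = Re (mtrace (P * cost_sym))" ..
  qed
  from this[of \<rho> \<omega>] this[of "cconj \<rho>" "cconj \<omega>"]
  have "coupling_costs \<rho> \<omega> = coupling_costs (cconj \<rho>) (cconj \<omega>)"
    by (simp only: cconj_cconj equalityI)
  then show ?thesis by (simp add: QW2_Pauli)
qed

lemma d_sym_unitary_conj:
  "unitary2 V \<Longrightarrow> \<rho> \<in> carrier_mat 2 2 \<Longrightarrow> \<omega> \<in> carrier_mat 2 2 \<Longrightarrow>
   d_sym (unitary_conj V \<rho>) (unitary_conj V \<omega>) = d_sym \<rho> \<omega>"
  by (simp add: d_sym_def QWdiv_def QW2_Pauli_unitary_conj)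

lemma d_sym_cconj: "d_sym (cconj \<rho>) (cconj \<omega>) = d_sym \<rho> \<omega>"
  by (simp add: d_sym_def QWdiv_def QW2_Pauli_cconj)

lemma d_sym_antiunitary_conj:
  "unitary2 V \<Longrightarrow> \<rho> \<in> carrier_mat 2 2 \<Longrightarrow> \<omega> \<in> carrier_mat 2 2 \<Longrightarrow>
   d_sym (antiunitary_conj V \<rho>) (antiunitary_conj V \<omega>) = d_sym \<rho> \<omega>"
  by (simp add: antiunitary_conj_eq d_sym_unitary_conj d_sym_cconj)

definition hs_inner :: "complex mat \<Rightarrow> complex mat \<Rightarrow> real" where
  "hs_inner A B = Re (mtrace (A * B))"

definition bloch :: "real \<Rightarrow> complex \<Rightarrow> complex mat" where
  "bloch p z = mat 2 2 (\<lambda>(i,j). if i = 0 then (if j = 0 then complex_of_real p else z)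
                                 else (if j = 0 then cnj z else complex_of_real (1 - p)))"

lemma bloch_carrier [simp]: "bloch p z \<in> carrier_mat 2 2"
  by (simp add: bloch_def)

lemma bloch_eq_iff: "bloch p z = bloch q w \<longleftrightarrow> p = q \<and> z = w"
proof
  assume "bloch p z = bloch q w"
  from arg_cong[OF this, of "\<lambda>M. M $$ (0,0)"] arg_cong[OF this, of "\<lambda>M. M $$ (0,1)"]
  show "p = q \<and> z = w" by (simp add: bloch_def)
qed simp

lemma cconj_bloch: "cconj (bloch p z) = bloch p (cnj z)"
  by (rule eq_matI) (auto simp: bloch_def cconj_def)

lemma hs_inner_bloch:
  "hs_inner (bloch p z) (bloch q w) = p*q + (1-p)*(1-q) + 2 * (Re z * Re w + Im z * Im w)"
  by (simp add: hs_inner_def mtrace_def bloch_def scalar_prod_def sum_small algebra_simps)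

lemma states2_blochE:
  assumes "\<rho> \<in> states2"
  obtains p z where "\<rho> = bloch p z"
proof -
  have R: "\<rho> \<in> carrier_mat 2 2" and tr: "\<rho> $$ (0,0) + \<rho> $$ (1,1) = 1"
    using states2_carrier[OF assms] states2_trace[OF assms] .
  have real_diag: "Im (sesq 2 \<rho> v v) = 0" if "v \<in> carrier_vec 2" for v
    using psd_sesq[OF states2_psd[OF assms] that] by simp
  have "Im (\<rho> $$ (0,0)) = 0" "Im (\<rho> $$ (1,1)) = 0"
    using real_diag[of "vec 2 (\<lambda>i. if i = 0 then 1 else 0)"] real_diag[of "vec 2 (\<lambda>i. if i = 0 then 0 else 1)"]
    by (simp_all add: sesq_def sum_small)
  moreover have "Im (\<rho> $$ (0,1)) + Im (\<rho> $$ (1,0)) = 0" "Re (\<rho> $$ (0,1)) - Re (\<rho> $$ (1,0)) = 0"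
    using calculation real_diag[of "vec 2 (\<lambda>i. 1)"] real_diag[of "vec 2 (\<lambda>i. if i = 0 then 1 else \<i>)"]
    by (simp_all add: sesq_def sum_small)
  ultimately have "\<rho> = bloch (Re (\<rho> $$ (0,0))) (\<rho> $$ (0,1))"
    using tr by (intro mat2_eqI[OF R bloch_carrier]) (simp add: bloch_def complex_eq_iff)
  then show ?thesis using that by blast
qed

lemma hs_inner_proj2: "hs_inner (proj2 a0 a1) (proj2 b0 b1) = (cmod (cnj a0 * b0 + cnj a1 * b1))^2"
proof -
  have "mtrace (proj2 a0 a1 * proj2 b0 b1) = (cnj a0 * b0 + cnj a1 * b1) * cnj (cnj a0 * b0 + cnj a1 * b1)"
    by (simp add: mtrace_def proj2_def scalar_prod_def sum_small algebra_simps)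
  then show ?thesis
    by (simp add: hs_inner_def complex_norm_square[symmetric] del: complex_cnj_add complex_cnj_mult)
qed

lemma hs_inner_pure_self: "\<sigma> \<in> pure2 \<Longrightarrow> hs_inner \<sigma> \<sigma> = 1"
  by (elim pure2_proj2E) (simp add: hs_inner_proj2 mult.commute)

lemma hs_inner_unitary_conj:
  "unitary2 V \<Longrightarrow> A \<in> carrier_mat 2 2 \<Longrightarrow> B \<in> carrier_mat 2 2 \<Longrightarrow>
   hs_inner (unitary_conj V A) (unitary_conj V B) = hs_inner A B"
  by (simp add: hs_inner_def unitary_conj_mult mtrace_unitary_conj)

lemma hs_inner_commute:
  "A \<in> carrier_mat n n \<Longrightarrow> B \<in> carrier_mat n n \<Longrightarrow> hs_inner A B = hs_inner B A"
  by (simp add: hs_inner_def mtrace_mult_comm)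

lemma hs_inner_add_right:
  "A \<in> carrier_mat 2 2 \<Longrightarrow> B \<in> carrier_mat 2 2 \<Longrightarrow> C \<in> carrier_mat 2 2 \<Longrightarrow>
   hs_inner A (B + C) = hs_inner A B + hs_inner A C"
  by (simp add: hs_inner_def mtrace_def scalar_prod_def sum_small algebra_simps)

lemma hs_inner_states2_one: "\<rho> \<in> states2 \<Longrightarrow> hs_inner \<rho> (1\<^sub>m 2) = 1"
  by (elim states2_blochE) (simp add: hs_inner_def mtrace_def bloch_def scalar_prod_def sum_small)

definition coord2 :: "complex \<Rightarrow> complex \<Rightarrow> nat \<Rightarrow> complex" where
  "coord2 a0 a1 i = (if i = 0 then a0 else a1)"

lemma proj2_coord2: "proj2 a0 a1 = mat 2 2 (\<lambda>(i,j). coord2 a0 a1 i * cnj (coord2 a0 a1 j))"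
  by (simp add: proj2_def coord2_def)

definition mat2_of_cols :: "complex \<Rightarrow> complex \<Rightarrow> complex \<Rightarrow> complex \<Rightarrow> complex mat" where
  "mat2_of_cols c0 c1 b0 b1 = mat 2 2 (\<lambda>(i,j). if j = 0 then coord2 c0 c1 i else coord2 b0 b1 i)"

lemma unitary2_mat2_of_cols:
  assumes "c0*cnj c0 + c1*cnj c1 = 1" "b0*cnj b0 + b1*cnj b1 = 1" "cnj c0*b0 + cnj c1*b1 = 0"
  shows "unitary2 (mat2_of_cols c0 c1 b0 b1)"
proof -
  let ?V = "mat2_of_cols c0 c1 b0 b1"
  have V: "?V \<in> carrier_mat 2 2" by (simp add: mat2_of_cols_def)
  have "cnj b0*c0 + cnj b1*c1 = 0" using arg_cong[OF assms(3), of cnj] by (simp add: mult.commute)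
  then have "adj ?V * ?V = 1\<^sub>m 2"
    using assms V
    by (intro mat2_eqI) (auto simp: mat2_of_cols_def coord2_def scalar_prod_def sum_small mult.commute)
  moreover then have "?V * adj ?V = 1\<^sub>m 2" using mat_mult_left_right_inverse[of "adj ?V" 2 ?V] V by auto
  ultimately show ?thesis using V by (simp add: unitary2_def)
qed

lemma orthonormal_pair_complete:
  assumes "c0*cnj c0 + c1*cnj c1 = 1" "b0*cnj b0 + b1*cnj b1 = 1" "cnj c0*b0 + cnj c1*b1 = 0"
    and ij: "i < 2" "j < 2"
  shows "coord2 c0 c1 i * cnj (coord2 c0 c1 j) + coord2 b0 b1 i * cnj (coord2 b0 b1 j) =
         (if i = j then 1 else 0)"
proof -
  let ?V = "mat2_of_cols c0 c1 b0 b1"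
  have "(?V * adj ?V) $$ (i,j) = (if i = j then 1 else 0)"
    using unitary2_mat2_of_cols[OF assms(1-3)] ij by (simp add: unitary2_def)
  then show ?thesis using ij by (simp add: mat2_of_cols_def scalar_prod_def sum_small)
qed

lemma proj2_add_orthogonal:
  assumes "c0*cnj c0 + c1*cnj c1 = 1" "b0*cnj b0 + b1*cnj b1 = 1" "cnj c0*b0 + cnj c1*b1 = 0"
  shows "proj2 c0 c1 + proj2 b0 b1 = 1\<^sub>m 2"
  by (rule eq_matI) (auto simp: proj2_coord2 orthonormal_pair_complete[OF assms])

lemma pure2_orthogonal_sum:
  assumes "a \<in> pure2" "b \<in> pure2" "hs_inner a b = 0"
  shows "a + b = 1\<^sub>m 2"
proof -
  obtain c0 c1 b0 b1 where "c0*cnj c0 + c1*cnj c1 = 1" "a = proj2 c0 c1"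
    "b0*cnj b0 + b1*cnj b1 = 1" "b = proj2 b0 b1"
    using assms(1,2) by (metis pure2_proj2E)
  moreover from this have "cnj c0*b0 + cnj c1*b1 = 0" using assms(3) by (simp add: hs_inner_proj2)
  ultimately show ?thesis using proj2_add_orthogonal by simp
qed

definition proj_zero :: "complex mat" where "proj_zero = bloch 1 0"
definition proj_one :: "complex mat" where "proj_one = bloch 0 0"
definition proj_plus :: "complex mat" where "proj_plus = bloch (1/2) (1/2)"
definition proj_i :: "complex mat" where "proj_i = bloch (1/2) (-\<i>/2)"

definition sqrt_half :: complex where
  "sqrt_half = complex_of_real (sqrt 2 / 2)"

lemma sqrt_half_sq: "sqrt_half * sqrt_half = 1/2" and cnj_sqrt_half [simp]: "cnj sqrt_half = sqrt_half"
proof -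
  have "sqrt 2 / 2 * (sqrt 2 / 2) = (1/2::real)" by (simp add: field_simps)
  then show "sqrt_half * sqrt_half = 1/2" unfolding sqrt_half_def of_real_mult[symmetric] by simp
  show "cnj sqrt_half = sqrt_half" by (simp add: sqrt_half_def)
qed

lemma sqrt_half_mult: "sqrt_half * (sqrt_half * c) = c / 2"
  using sqrt_half_sq by (metis mult.assoc mult.commute times_divide_eq_right mult_1)

lemma i_sqrt_half_sq: "\<i> * sqrt_half * (\<i> * sqrt_half) = -1/2"
proof -
  have "\<i> * sqrt_half * (\<i> * sqrt_half) = (\<i> * \<i>) * (sqrt_half * sqrt_half)" by (simp only: mult_ac)
  then show ?thesis by (simp add: sqrt_half_sq)
qed

lemma proj_zero_proj2: "proj_zero = proj2 1 0"
  by (rule eq_matI) (auto simp: proj_zero_def bloch_def proj2_def)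

lemma proj_one_proj2: "proj_one = proj2 0 1"
  by (rule eq_matI) (auto simp: proj_one_def bloch_def proj2_def)

lemma proj_plus_proj2: "proj_plus = proj2 sqrt_half sqrt_half"
  by (rule eq_matI) (auto simp: proj_plus_def bloch_def proj2_def sqrt_half_sq)

lemma proj_i_proj2: "proj_i = proj2 sqrt_half (\<i> * sqrt_half)"
  by (rule eq_matI) (auto simp: proj_i_def bloch_def proj2_def sqrt_half_sq sqrt_half_mult i_sqrt_half_sq)

lemma proj2_pure: "a0 * cnj a0 + a1 * cnj a1 = 1 \<Longrightarrow> proj2 a0 a1 \<in> pure2"
  unfolding pure2_iff_proj2 by blast

lemma proj_zero_pure: "proj_zero \<in> pure2"
  unfolding proj_zero_proj2 by (rule proj2_pure) simp

lemma proj_one_pure: "proj_one \<in> pure2"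
  unfolding proj_one_proj2 by (rule proj2_pure) simp

lemma proj_plus_pure: "proj_plus \<in> pure2"
  unfolding proj_plus_proj2 by (rule proj2_pure) (simp add: sqrt_half_sq)

lemma proj_i_pure: "proj_i \<in> pure2"
  unfolding proj_i_proj2 by (rule proj2_pure) (simp add: sqrt_half_sq sqrt_half_mult i_sqrt_half_sq)

subsection \<open>Isometries preserve transition probabilities\<close>

lemma d_sym_pure:
  assumes "\<rho> \<in> states2" "\<sigma> \<in> pure2"
  shows "d_sym \<rho> \<sigma> = sqrt (6 - 4 * hs_inner \<rho> \<sigma> - QW2 [sigma1, sigma2, sigma3] \<rho> \<rho> / 2)"
  using QW2_Pauli_pure[OF assms] QW2_Pauli_pure[OF pure2_subset_states2[OF assms(2)] assms(2)]
    hs_inner_pure_self[OF assms(2)]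
  by (simp add: d_sym_def QWdiv_def hs_inner_def field_simps)

text \<open>The self-distance \<open>D\<^sup>2(\<rho>,\<rho>)\<close> is the only other unknown in \<open>d_sym_pure\<close>; it equals \<open>4\<close> on
  pure states, and the orthogonal pair \<open>|0\<rangle>, |1\<rangle>\<close> shows that \<open>\<Phi>\<close> preserves it on all states.\<close>

lemma isometry_preserves_transitions:
  assumes states: "\<forall>\<rho> \<in> states2. \<Phi> \<rho> \<in> states2"
    and iso: "\<forall>\<rho> \<in> states2. \<forall>\<omega> \<in> states2. d_sym (\<Phi> \<rho>) (\<Phi> \<omega>) = d_sym \<rho> \<omega>"
    and pure: "\<forall>\<rho> \<in> pure2. \<Phi> \<rho> \<in> pure2"
    and "\<rho> \<in> states2" "\<sigma> \<in> pure2"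
  shows "hs_inner (\<Phi> \<rho>) (\<Phi> \<sigma>) = hs_inner \<rho> \<sigma>"
proof -
  define q where "q \<rho> = QW2 [sigma1, sigma2, sigma3] \<rho> \<rho>" for \<rho>
  have shift: "8 * hs_inner (\<Phi> \<rho>) (\<Phi> \<sigma>) = 8 * hs_inner \<rho> \<sigma> + q \<rho> - q (\<Phi> \<rho>)"
    if "\<rho> \<in> states2" "\<sigma> \<in> pure2" for \<rho> \<sigma>
  proof -
    have "d_sym (\<Phi> \<rho>) (\<Phi> \<sigma>) = d_sym \<rho> \<sigma>" using iso that pure2_subset_states2 by blast
    then show ?thesis
      unfolding d_sym_pure[OF that] d_sym_pure[OF states[rule_format, OF that(1)] pure[rule_format, OF that(2)]]
      by (simp add: q_def)
  qed
  have q_pure: "q \<sigma> = 4" if "\<sigma> \<in> pure2" for \<sigma>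
    using QW2_Pauli_pure[OF pure2_subset_states2[OF that] that] hs_inner_pure_self[OF that]
    by (simp add: q_def hs_inner_def)
  have pure_pairs: "hs_inner (\<Phi> \<sigma>) (\<Phi> \<tau>) = hs_inner \<sigma> \<tau>" if "\<sigma> \<in> pure2" "\<tau> \<in> pure2" for \<sigma> \<tau>
    using shift[OF pure2_subset_states2 that(2)] q_pure that pure by (simp add: that(1))
  have "hs_inner (\<Phi> proj_zero) (\<Phi> proj_one) = 0"
    using pure_pairs[OF proj_zero_pure proj_one_pure] by (simp add: proj_zero_def proj_one_def hs_inner_bloch)
  then have "\<Phi> proj_zero + \<Phi> proj_one = 1\<^sub>m 2"
    using pure proj_zero_pure proj_one_pure by (blast intro: pure2_orthogonal_sum)
  then have "hs_inner (\<Phi> \<rho>) (\<Phi> proj_zero) + hs_inner (\<Phi> \<rho>) (\<Phi> proj_one) = 1"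
    using states assms(4) pure proj_zero_pure proj_one_pure hs_inner_add_right hs_inner_states2_one
      states2_carrier pure2_subset_states2 by metis
  moreover have "hs_inner \<rho> proj_zero + hs_inner \<rho> proj_one = 1"
    using assms(4) by (elim states2_blochE) (simp add: proj_zero_def proj_one_def hs_inner_bloch)
  ultimately have "q \<rho> = q (\<Phi> \<rho>)"
    using shift[OF assms(4) proj_zero_pure] shift[OF assms(4) proj_one_pure] by simp
  with shift[OF assms(4,5)] show ?thesis by simp
qed

subsection \<open>Classification\<close>

lemma unitary_conj_mat2_of_cols:
  "unitary_conj (mat2_of_cols c0 c1 b0 b1) proj_zero = proj2 c0 c1"
  "unitary_conj (mat2_of_cols c0 c1 b0 b1) proj_plus = proj2 (sqrt_half * (c0 + b0)) (sqrt_half * (c1 + b1))"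
  by (rule eq_matI;
      auto simp: unitary_conj_def mat2_of_cols_def coord2_def proj_zero_def proj_plus_def bloch_def
        proj2_def scalar_prod_def sum_small algebra_simps sqrt_half_mult)+

lemma proj2_phase: "u * cnj u = 1 \<Longrightarrow> proj2 (u * a0) (u * a1) = proj2 a0 a1"
  by (rule eq_matI) (auto simp: proj2_def algebra_simps)

lemma orthonormal_pair_expansion:
  assumes "c0*cnj c0 + c1*cnj c1 = 1" "b0*cnj b0 + b1*cnj b1 = 1" "cnj c0*b0 + cnj c1*b1 = 0"
    and "i < 2"
  shows "(cnj c0*x0 + cnj c1*x1) * coord2 c0 c1 i + (cnj b0*x0 + cnj b1*x1) * coord2 b0 b1 i =
         coord2 x0 x1 i"
proof -
  have "(cnj c0*x0 + cnj c1*x1) * coord2 c0 c1 i + (cnj b0*x0 + cnj b1*x1) * coord2 b0 b1 i =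
      (coord2 c0 c1 i * cnj (coord2 c0 c1 0) + coord2 b0 b1 i * cnj (coord2 b0 b1 0)) * x0
      + (coord2 c0 c1 i * cnj (coord2 c0 c1 1) + coord2 b0 b1 i * cnj (coord2 b0 b1 1)) * x1"
    by (simp add: coord2_def algebra_simps)
  then show ?thesis
    using orthonormal_pair_complete[OF assms, of 0] orthonormal_pair_complete[OF assms, of 1] assms(4)
    by (auto simp: coord2_def)
qed

lemma orthonormal_pair_parseval:
  assumes nc: "c0*cnj c0 + c1*cnj c1 = 1" and nb: "b0*cnj b0 + b1*cnj b1 = 1"
    and orth: "cnj c0*b0 + cnj c1*b1 = 0" and nx: "x0*cnj x0 + x1*cnj x1 = 1"
  shows "(cmod (cnj c0*x0 + cnj c1*x1))^2 + (cmod (cnj b0*x0 + cnj b1*x1))^2 = 1"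
proof -
  have "hs_inner (proj2 x0 x1) (proj2 c0 c1) + hs_inner (proj2 x0 x1) (proj2 b0 b1) = 1"
    using hs_inner_add_right[of "proj2 x0 x1" "proj2 c0 c1" "proj2 b0 b1"]
      hs_inner_states2_one[OF proj2_in_states2[OF nx]] by (simp add: proj2_add_orthogonal[OF nc nb orth])
  then show ?thesis
    using hs_inner_commute[of "proj2 x0 x1" 2 "proj2 c0 c1"] hs_inner_commute[of "proj2 x0 x1" 2 "proj2 b0 b1"]
    by (simp add: hs_inner_proj2)
qed

text \<open>\<open>V\<close> has columns proportional to \<open>c\<close> and \<open>c\<^sup>\<perp> = (-c\<^sub>1\<^sup>*, c\<^sub>0\<^sup>*)\<close>; their phases are fixed by
  requiring \<open>V (e\<^sub>0 + e\<^sub>1)/\<surd>2 = x\<close>, which is possible because \<open>x\<close> is at transition probability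
  \<open>1/2\<close> from both \<open>c\<close> and \<open>c\<^sup>\<perp>\<close>.\<close>

lemma unitary_onto_pure_pair:
  assumes "a \<in> pure2" "x \<in> pure2" "hs_inner a x = 1/2"
  obtains V where "unitary2 V" "unitary_conj V proj_zero = a" "unitary_conj V proj_plus = x"
proof -
  obtain c0 c1 where nc: "c0*cnj c0 + c1*cnj c1 = 1" and a: "a = proj2 c0 c1"
    using pure2_proj2E[OF assms(1)] .
  obtain x0 x1 where nx: "x0*cnj x0 + x1*cnj x1 = 1" and x: "x = proj2 x0 x1"
    using pure2_proj2E[OF assms(2)] .
  define b0 where "b0 = - cnj c1"
  define b1 where "b1 = cnj c0"
  have nb: "b0*cnj b0 + b1*cnj b1 = 1" and orth: "cnj c0*b0 + cnj c1*b1 = 0"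
    using nc by (simp_all add: b0_def b1_def algebra_simps)
  define \<alpha> where "\<alpha> = cnj c0 * x0 + cnj c1 * x1"
  define \<beta> where "\<beta> = cnj b0 * x0 + cnj b1 * x1"
  have "(cmod \<alpha>)^2 = 1/2" using assms(3) by (simp add: a x hs_inner_proj2 \<alpha>_def)
  moreover from this have "(cmod \<beta>)^2 = 1/2"
    using orthonormal_pair_parseval[OF nc nb orth nx] by (simp add: \<alpha>_def \<beta>_def)
  ultimately have \<alpha>\<beta>: "\<alpha> * cnj \<alpha> = 1/2" "\<beta> * cnj \<beta> = 1/2"
    unfolding complex_norm_square[symmetric] by (simp_all only:) simp_all
  define u where "u = 2 * sqrt_half * \<alpha>"
  define w where "w = 2 * sqrt_half * \<beta>"
  have "u * cnj u = 4 * (sqrt_half * sqrt_half) * (\<alpha> * cnj \<alpha>)"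
    "w * cnj w = 4 * (sqrt_half * sqrt_half) * (\<beta> * cnj \<beta>)"
    by (simp_all add: u_def w_def algebra_simps)
  then have nu: "u * cnj u = 1" and nw: "w * cnj w = 1" by (simp_all add: sqrt_half_sq \<alpha>\<beta>)
  define V where "V = mat2_of_cols (u*c0) (u*c1) (w*b0) (w*b1)"
  have "(u*c0)*cnj (u*c0) + (u*c1)*cnj (u*c1) = (u * cnj u) * (c0*cnj c0 + c1*cnj c1)"
    "(w*b0)*cnj (w*b0) + (w*b1)*cnj (w*b1) = (w * cnj w) * (b0*cnj b0 + b1*cnj b1)"
    "cnj (u*c0)*(w*b0) + cnj (u*c1)*(w*b1) = (cnj u * w) * (cnj c0*b0 + cnj c1*b1)"
    by (simp_all add: algebra_simps)
  then have "unitary2 V" unfolding V_def using nc nb orth nu nw by (intro unitary2_mat2_of_cols) simp_all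
  moreover have "unitary_conj V proj_zero = a"
    by (simp add: V_def unitary_conj_mat2_of_cols proj2_phase[OF nu] a)
  moreover have "sqrt_half * (u*c0 + w*b0) = x0" "sqrt_half * (u*c1 + w*b1) = x1"
    using orthonormal_pair_expansion[OF nc nb orth, of 0 x0 x1]
      orthonormal_pair_expansion[OF nc nb orth, of 1 x0 x1]
    by (simp_all add: u_def w_def \<alpha>_def \<beta>_def coord2_def sqrt_half_mult algebra_simps)
  then have "unitary_conj V proj_plus = x"
    by (simp add: V_def unitary_conj_mat2_of_cols x distrib_left)
  ultimately show ?thesis using that by blast
qed

lemma states2_eq_by_reference_transitions:
  assumes "\<rho> \<in> states2" "\<rho>' \<in> states2"
    and "hs_inner \<rho>' proj_zero = hs_inner \<rho> proj_zero" "hs_inner \<rho>' proj_plus = hs_inner \<rho> proj_plus"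
      "hs_inner \<rho>' proj_i = hs_inner \<rho> proj_i"
  shows "\<rho>' = \<rho>"
proof -
  obtain p z p' z' where "\<rho> = bloch p z" "\<rho>' = bloch p' z'"
    using states2_blochE assms(1,2) by metis
  with assms(3-5) show ?thesis
    by (simp add: proj_zero_def proj_plus_def proj_i_def hs_inner_bloch bloch_eq_iff complex_eq_iff)
qed

lemma pure_unbiased_to_zero_plus:
  assumes "\<sigma> \<in> states2" "hs_inner \<sigma> \<sigma> = 1" "hs_inner \<sigma> proj_zero = 1/2" "hs_inner \<sigma> proj_plus = 1/2"
  shows "\<sigma> = proj_i \<or> \<sigma> = cconj proj_i"
proof -
  obtain p z where \<sigma>: "\<sigma> = bloch p z" using states2_blochE[OF assms(1)] .
  have "p = 1/2" "Re z = 0" "Im z * Im z = 1/4"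
    using assms(2-4) by (auto simp: \<sigma> proj_zero_def proj_plus_def hs_inner_bloch field_simps)
  moreover from this(3) have "(Im z - 1/2) * (Im z + 1/2) = 0" by (simp add: algebra_simps)
  then have "Im z = 1/2 \<or> Im z = -1/2" by auto
  ultimately have "\<sigma> = bloch (1/2) (-\<i>/2) \<or> \<sigma> = bloch (1/2) (\<i>/2)"
    by (auto simp: \<sigma> bloch_eq_iff complex_eq_iff)
  then show ?thesis by (auto simp: proj_i_def cconj_bloch)
qed

lemma hs_inner_cconj_cconj:
  "A \<in> carrier_mat n n \<Longrightarrow> B \<in> carrier_mat n n \<Longrightarrow> hs_inner (cconj A) (cconj B) = hs_inner A B"
  by (simp add: hs_inner_def mtrace_def scalar_prod_def cconj_def)

lemma transition_preserving_fixing_references: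
  assumes states: "\<forall>\<rho> \<in> states2. \<Psi> \<rho> \<in> states2"
    and trans: "\<forall>\<rho> \<in> states2. \<forall>\<sigma> \<in> pure2. hs_inner (\<Psi> \<rho>) (\<Psi> \<sigma>) = hs_inner \<rho> \<sigma>"
    and "\<Psi> proj_zero = proj_zero" "\<Psi> proj_plus = proj_plus" "\<Psi> proj_i = proj_i"
    and \<rho>: "\<rho> \<in> states2"
  shows "\<Psi> \<rho> = \<rho>"
proof (rule states2_eq_by_reference_transitions[OF \<rho>])
  have "hs_inner (\<Psi> \<rho>) (\<Psi> \<sigma>) = hs_inner \<rho> \<sigma>" if "\<sigma> \<in> pure2" for \<sigma>
    using trans \<rho> that by blast
  from this[OF proj_zero_pure] this[OF proj_plus_pure] this[OF proj_i_pure]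
  show "\<Psi> \<rho> \<in> states2" "hs_inner (\<Psi> \<rho>) proj_zero = hs_inner \<rho> proj_zero"
    "hs_inner (\<Psi> \<rho>) proj_plus = hs_inner \<rho> proj_plus" "hs_inner (\<Psi> \<rho>) proj_i = hs_inner \<rho> proj_i"
    using states \<rho> assms(3-5) by simp_all
qed

text \<open>The transitions to \<open>|0\<rangle>, |+\<rangle>, |+i\<rangle>\<close> determine a qubit state; \<open>|0\<rangle>\<close> and \<open>|+\<rangle>\<close> are fixed,
  and \<open>|+i\<rangle>\<close> can only go to itself or to its complex conjugate \<open>|-i\<rangle>\<close>.\<close>

lemma transition_preserving_fixing_zero_plus:
  assumes states: "\<forall>\<rho> \<in> states2. \<Psi> \<rho> \<in> states2"
    and trans: "\<forall>\<rho> \<in> states2. \<forall>\<sigma> \<in> pure2. hs_inner (\<Psi> \<rho>) (\<Psi> \<sigma>) = hs_inner \<rho> \<sigma>"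
    and zero: "\<Psi> proj_zero = proj_zero" and plus: "\<Psi> proj_plus = proj_plus"
  shows "(\<forall>\<rho> \<in> states2. \<Psi> \<rho> = \<rho>) \<or> (\<forall>\<rho> \<in> states2. \<Psi> \<rho> = cconj \<rho>)"
proof -
  have i_state: "proj_i \<in> states2" using pure2_subset_states2[OF proj_i_pure] .
  have "hs_inner (\<Psi> proj_i) (\<Psi> proj_i) = 1"
    using trans i_state proj_i_pure hs_inner_pure_self[OF proj_i_pure] by simp
  moreover have "hs_inner (\<Psi> proj_i) proj_zero = 1/2" "hs_inner (\<Psi> proj_i) proj_plus = 1/2"
    using trans i_state proj_zero_pure proj_plus_pure zero plus
    by (force simp: proj_zero_def proj_plus_def proj_i_def hs_inner_bloch)+
  ultimately consider "\<Psi> proj_i = proj_i" | "\<Psi> proj_i = cconj proj_i"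
    using pure_unbiased_to_zero_plus states i_state by blast
  then show ?thesis
  proof cases
    case 1
    then show ?thesis using transition_preserving_fixing_references[OF states trans zero plus] by blast
  next
    case 2
    have "cconj (\<Psi> \<rho>) = \<rho>" if "\<rho> \<in> states2" for \<rho>
    proof (rule transition_preserving_fixing_references[where \<Psi> = "\<lambda>\<rho>. cconj (\<Psi> \<rho>)", OF _ _ _ _ _ that])
      show "\<forall>\<rho> \<in> states2. cconj (\<Psi> \<rho>) \<in> states2" using states states2_cconj by blast
      show "\<forall>\<rho> \<in> states2. \<forall>\<sigma> \<in> pure2. hs_inner (cconj (\<Psi> \<rho>)) (cconj (\<Psi> \<sigma>)) = hs_inner \<rho> \<sigma>"
      proof (intro ballI)
        fix \<rho> \<sigma> assume "\<rho> \<in> states2" "\<sigma> \<in> pure2"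
        moreover from this have "\<Psi> \<rho> \<in> carrier_mat 2 2" "\<Psi> \<sigma> \<in> carrier_mat 2 2"
          using states pure2_subset_states2 states2_carrier by blast+
        ultimately show "hs_inner (cconj (\<Psi> \<rho>)) (cconj (\<Psi> \<sigma>)) = hs_inner \<rho> \<sigma>"
          using trans by (simp add: hs_inner_cconj_cconj)
      qed
      show "cconj (\<Psi> proj_zero) = proj_zero" "cconj (\<Psi> proj_plus) = proj_plus" "cconj (\<Psi> proj_i) = proj_i"
        using zero plus 2 by (simp_all add: proj_zero_def proj_plus_def cconj_bloch)
    qed
    then show ?thesis by (metis cconj_cconj)
  qed
qed

lemma isometry_is_unitary_or_antiunitary_conj:
  assumes states: "\<forall>\<rho> \<in> states2. \<Phi> \<rho> \<in> states2"
    and iso: "\<forall>\<rho> \<in> states2. \<forall>\<omega> \<in> states2. d_sym (\<Phi> \<rho>) (\<Phi> \<omega>) = d_sym \<rho> \<omega>"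
    and pure: "\<forall>\<rho> \<in> pure2. \<Phi> \<rho> \<in> pure2"
  shows "\<exists>V. unitary2 V \<and> ((\<forall>\<rho> \<in> states2. \<Phi> \<rho> = unitary_conj V \<rho>) \<or>
                            (\<forall>\<rho> \<in> states2. \<Phi> \<rho> = antiunitary_conj V \<rho>))"
proof -
  note trans = isometry_preserves_transitions[OF states iso pure]
  have "hs_inner (\<Phi> proj_zero) (\<Phi> proj_plus) = 1/2"
    using trans[OF pure2_subset_states2[OF proj_zero_pure] proj_plus_pure]
    by (simp add: proj_zero_def proj_plus_def hs_inner_bloch)
  then obtain V where V: "unitary2 V" and
    zero: "unitary_conj V proj_zero = \<Phi> proj_zero" and plus: "unitary_conj V proj_plus = \<Phi> proj_plus"
    using unitary_onto_pure_pair pure proj_zero_pure proj_plus_pure by metis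
  define \<Psi> where "\<Psi> \<rho> = unitary_conj (adj V) (\<Phi> \<rho>)" for \<rho>
  have V': "unitary2 (adj V)" using unitary2_adj[OF V] .
  have \<Phi>_eq: "\<Phi> \<rho> = unitary_conj V (\<Psi> \<rho>)" if "\<rho> \<in> states2" for \<rho>
    using unitary_conj_adj_cancel[OF V' states2_carrier] states that by (simp add: \<Psi>_def)
  have "(\<forall>\<rho> \<in> states2. \<Psi> \<rho> = \<rho>) \<or> (\<forall>\<rho> \<in> states2. \<Psi> \<rho> = cconj \<rho>)"
  proof (rule transition_preserving_fixing_zero_plus)
    show "\<forall>\<rho> \<in> states2. \<Psi> \<rho> \<in> states2"
      using states states2_unitary_conj[OF V'] by (simp add: \<Psi>_def)
    show "\<forall>\<rho> \<in> states2. \<forall>\<sigma> \<in> pure2. hs_inner (\<Psi> \<rho>) (\<Psi> \<sigma>) = hs_inner \<rho> \<sigma>"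
      using trans hs_inner_unitary_conj[OF V'] states pure states2_carrier pure2_subset_states2
      by (simp add: \<Psi>_def)
    show "\<Psi> proj_zero = proj_zero" "\<Psi> proj_plus = proj_plus"
      unfolding \<Psi>_def zero[symmetric] plus[symmetric]
      by (simp_all add: unitary_conj_adj_cancel[OF V] proj_zero_def proj_plus_def)
  qed
  then show ?thesis
    using V \<Phi>_eq by (auto simp: antiunitary_conj_eq)
qed

theorem theorem2p1:
  shows "(\<forall>\<Phi> :: complex mat \<Rightarrow> complex mat.
            (\<forall>\<rho> \<in> states2. \<Phi> \<rho> \<in> states2) \<and>
            (\<forall>\<rho> \<in> states2. \<forall>\<omega> \<in> states2. d_sym (\<Phi> \<rho>) (\<Phi> \<omega>) = d_sym \<rho> \<omega>) \<and>
            (\<forall>\<rho> \<in> pure2. \<Phi> \<rho> \<in> pure2)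
          \<longrightarrow> (\<exists>V. unitary2 V \<and>
                 ((\<forall>\<rho> \<in> states2. \<Phi> \<rho> = unitary_conj V \<rho>) \<or>
                  (\<forall>\<rho> \<in> states2. \<Phi> \<rho> = antiunitary_conj V \<rho>))))
       \<and> (\<forall>V. unitary2 V \<longrightarrow>
            (\<forall>\<rho> \<in> states2. unitary_conj V \<rho> \<in> states2 \<and> antiunitary_conj V \<rho> \<in> states2) \<and>
            (\<forall>\<rho> \<in> states2. \<forall>\<omega> \<in> states2.
               d_sym (unitary_conj V \<rho>) (unitary_conj V \<omega>) = d_sym \<rho> \<omega> \<and>
               d_sym (antiunitary_conj V \<rho>) (antiunitary_conj V \<omega>) = d_sym \<rho> \<omega>))"
proof (intro conjI allI impI ballI)
  fix \<Phi> :: "complex mat \<Rightarrow> complex mat"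
  assume "(\<forall>\<rho> \<in> states2. \<Phi> \<rho> \<in> states2) \<and>
    (\<forall>\<rho> \<in> states2. \<forall>\<omega> \<in> states2. d_sym (\<Phi> \<rho>) (\<Phi> \<omega>) = d_sym \<rho> \<omega>) \<and>
    (\<forall>\<rho> \<in> pure2. \<Phi> \<rho> \<in> pure2)"
  then show "\<exists>V. unitary2 V \<and> ((\<forall>\<rho> \<in> states2. \<Phi> \<rho> = unitary_conj V \<rho>) \<or>
                                 (\<forall>\<rho> \<in> states2. \<Phi> \<rho> = antiunitary_conj V \<rho>))"
    using isometry_is_unitary_or_antiunitary_conj by blast
next
  fix V \<rho> assume "unitary2 V" "\<rho> \<in> states2"
  then show "unitary_conj V \<rho> \<in> states2" "antiunitary_conj V \<rho> \<in> states2"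
    by (simp_all add: states2_unitary_conj states2_antiunitary_conj)
next
  fix V \<rho> \<omega> assume "unitary2 V" "\<rho> \<in> states2" "\<omega> \<in> states2"
  then show "d_sym (unitary_conj V \<rho>) (unitary_conj V \<omega>) = d_sym \<rho> \<omega>"
    "d_sym (antiunitary_conj V \<rho>) (antiunitary_conj V \<omega>) = d_sym \<rho> \<omega>"
    by (simp_all add: d_sym_unitary_conj d_sym_antiunitary_conj states2_carrier)
qed

end
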